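(* Let $k\in[K]$. Under (A1), (A2), (A3) and $\log p=o(n^{1/4}/\sqrt{\log n})$, $$\Big\|\frac1n\sum_{i=1}^n\Big(\frac{\gamma_{i,k}(\hat{\boldsymbol{\theta}})}{\hat\sigma_k^2}-\frac{\gamma_{i,k}(\boldsymbol{\theta})}{\sigma_k^2}\Big)(y_i-\boldsymbol{x}_i^T\boldsymbol{\beta}_k)\boldsymbol{x}_i\Big\|_\infty=o_p(1).$$
   Context: Setting. Data $(\boldsymbol{x}_i,y_i)\in\mathbb{R}^p\times\mathbb{R}$, $i\in[n]$, are i.i.d. draws from the mixture of experts (MoE) model with $K$ components: a latent label $z\in[K]$ satisfies $\mathbb{P}(z=k\mid\boldsymbol{x})=\pi_k(\boldsymbol{x})=\exp(\boldsymbol{x}^T\boldsymbol{\alpha}_k)/\sum_{\ell=1}^K\exp(\boldsymbol{x}^T\boldsymbol{\alpha}_\ell)$, and $y\mid\boldsymbol{x},z=k\sim N(\boldsymbol{x}^T\boldsymbol{\beta}_k,\sigma_k^2)$. The true parameter is $\boldsymbol{\theta}=(\{\boldsymbol{\beta}_k,\boldsymbol{\alpha}_k,\sigma_k\}_{k\in[K]})$. Asymptotics: $n\to\infty$, $p=p(n)\to\infty$, $K$ fixed. Let $\phi_k(\boldsymbol{x},y)=\frac{1}{\sqrt{2\pi}\sigma_k}\exp\!\big(-\frac{(y-\boldsymbol{x}^T\boldsymbol{\beta}_k)^2}{2\sigma_k^2}\big)$ and define the responsibilities $\gamma_{i,k}(\boldsymbol{\theta})=\pi_k(\boldsymbol{x}_i)\phi_k(\boldsymbol{x}_i,y_i)/\sum_{\ell=1}^K\pi_\ell(\boldsymbol{x}_i)\phi_\ell(\boldsymbol{x}_i,y_i)$;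 $\gamma_{i,k}(\hat{\boldsymbol{\theta}})$ denotes the same expression with all parameters replaced by those of $\hat{\boldsymbol{\theta}}=(\{\hat{\boldsymbol{\beta}}_k,\hat{\boldsymbol{\alpha}}_k,\hat\sigma_k\}_{k\in[K]})$, an arbitrary estimator of $\boldsymbol{\theta}$. Assumptions. (A1) $\max_{k\in[K]}\big(\|\hat{\boldsymbol{\beta}}_k-\boldsymbol{\beta}_k\|_1+\|\hat{\boldsymbol{\alpha}}_k-\boldsymbol{\alpha}_k\|_1+|\hat\sigma_k-\sigma_k|\big)=O_p(\eta_{\rm est})$ for a deterministic sequence $\eta_{\rm est}$ with $\sqrt{n}\log(np)\eta_{\rm est}^2=o(1)$. (A2) There is a positive semidefinite $\boldsymbol{\Sigma}\in\mathbb{R}^{p\times p}$ with $\|\boldsymbol{\Sigma}\|_{\rm op}\le C_\Sigma$ for a constant $C_\Sigma$, and the vectors $\boldsymbol{\Sigma}^{-1/2}\boldsymbol{x}_i$ are independent, mean zero, sub-Gaussian with sub-Gaussian norm $O(1)$. (A3) The $\sigma_k^2$ are strictly positive bounded constants and $\max_{k,\ell\in[K]}\|\boldsymbol{\beta}_k-\boldsymbol{\beta}_\ell\|_2=O(1)$. *)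

theory Defs
  imports "HOL-Probability.Probability" "HOL-Library.Landau_Symbols"
begin

text \<open>Vectors in R^p are represented as functions nat => real, only the
  coordinates j < p being relevant; p x p matrices as nat => nat => real.
  Mixture components are indexed by k < K (i.e. [K] = {0..<K}).\<close>

definition inner_p :: "nat \<Rightarrow> (nat \<Rightarrow> real) \<Rightarrow> (nat \<Rightarrow> real) \<Rightarrow> real" where
  "inner_p p u v = (\<Sum>j<p. u j * v j)"

definition norm1_p :: "nat \<Rightarrow> (nat \<Rightarrow> real) \<Rightarrow> real" where
  "norm1_p p u = (\<Sum>j<p. \<bar>u j\<bar>)"

definition norm2_p :: "nat \<Rightarrow> (nat \<Rightarrow> real) \<Rightarrow> real" where
  "norm2_p p u = sqrt (\<Sum>j<p. (u j)\<^sup>2)"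

definition matvec :: "nat \<Rightarrow> (nat \<Rightarrow> nat \<Rightarrow> real) \<Rightarrow> (nat \<Rightarrow> real) \<Rightarrow> (nat \<Rightarrow> real)" where
  "matvec p A u = (\<lambda>i. \<Sum>j<p. A i j * u j)"

definition is_inv_sqrt :: "nat \<Rightarrow> (nat \<Rightarrow> nat \<Rightarrow> real) \<Rightarrow> (nat \<Rightarrow> nat \<Rightarrow> real) \<Rightarrow> bool" where
  "is_inv_sqrt p R S \<longleftrightarrow>
     (\<forall>i<p. \<forall>j<p. R i j = R j i) \<and>
     (\<forall>u. (\<exists>j<p. u j \<noteq> 0) \<longrightarrow> inner_p p u (matvec p R u) > 0) \<and>
     (\<forall>i<p. \<forall>j<p. (\<Sum>a<p. \<Sum>b<p. R i a * S a b * R b j) = (if i = j then 1 else 0))"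

definition gate :: "nat \<Rightarrow> nat \<Rightarrow> (nat \<Rightarrow> nat \<Rightarrow> real) \<Rightarrow> (nat \<Rightarrow> real) \<Rightarrow> nat \<Rightarrow> real" where
  "gate K p alpha x k = exp (inner_p p x (alpha k)) / (\<Sum>l<K. exp (inner_p p x (alpha l)))"

definition comp_dens :: "nat \<Rightarrow> (nat \<Rightarrow> nat \<Rightarrow> real) \<Rightarrow> (nat \<Rightarrow> real) \<Rightarrow> (nat \<Rightarrow> real) \<Rightarrow> real \<Rightarrow> nat \<Rightarrow> real" where
  "comp_dens p beta sg x y k =
     1 / (sqrt (2 * pi) * sg k) * exp (- ((y - inner_p p x (beta k))\<^sup>2) / (2 * (sg k)\<^sup>2))"

definition resp :: "nat \<Rightarrow> nat \<Rightarrow> (nat \<Rightarrow> nat \<Rightarrow> real) \<Rightarrow> (nat \<Rightarrow> nat \<Rightarrow> real) \<Rightarrow> (nat \<Rightarrow> real)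
                    \<Rightarrow> (nat \<Rightarrow> real) \<Rightarrow> real \<Rightarrow> nat \<Rightarrow> real" where
  "resp K p alpha beta sg x y k =
     gate K p alpha x k * comp_dens p beta sg x y k /
     (\<Sum>l<K. gate K p alpha x l * comp_dens p beta sg x y l)"

definition moe_density :: "nat \<Rightarrow> nat \<Rightarrow> (nat \<Rightarrow> nat \<Rightarrow> real) \<Rightarrow> (nat \<Rightarrow> nat \<Rightarrow> real) \<Rightarrow> (nat \<Rightarrow> real)
                    \<Rightarrow> (nat \<Rightarrow> real) \<Rightarrow> real \<Rightarrow> real" where
  "moe_density K p alpha beta sg x y = (\<Sum>l<K. gate K p alpha x l * comp_dens p beta sg x y l)"

definition psi2_admissible :: "'a measure \<Rightarrow> ('a \<Rightarrow> real) \<Rightarrow> real \<Rightarrow> bool" where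
  "psi2_admissible M Z t \<longleftrightarrow> t > 0 \<and> integrable M (\<lambda>\<omega>. exp ((Z \<omega> / t)\<^sup>2)) \<and>
      (\<integral>\<omega>. exp ((Z \<omega> / t)\<^sup>2) \<partial>M) \<le> 2"

definition subgaussian :: "'a measure \<Rightarrow> ('a \<Rightarrow> real) \<Rightarrow> bool" where
  "subgaussian M Z \<longleftrightarrow> (\<exists>t. psi2_admissible M Z t)"

definition psi2_norm :: "'a measure \<Rightarrow> ('a \<Rightarrow> real) \<Rightarrow> real" where
  "psi2_norm M Z = Inf {t. psi2_admissible M Z t}"

definition o_p1 :: "'a measure \<Rightarrow> (nat \<Rightarrow> 'a \<Rightarrow> real) \<Rightarrow> bool" where
  "o_p1 M Z \<longleftrightarrow> (\<forall>\<epsilon>>0. (\<lambda>n. measure M {\<omega> \<in> space M. \<bar>Z n \<omega>\<bar> > \<epsilon>}) \<longlonglongrightarrow> 0)"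

definition O_p :: "'a measure \<Rightarrow> (nat \<Rightarrow> 'a \<Rightarrow> real) \<Rightarrow> (nat \<Rightarrow> real) \<Rightarrow> bool" where
  "O_p M Z eta \<longleftrightarrow> (\<forall>\<epsilon>>0. \<exists>C N. \<forall>n\<ge>N. measure M {\<omega> \<in> space M. \<bar>Z n \<omega>\<bar> > C * eta n} < \<epsilon>)"

end

theory Submission
  imports Defs "HOL-Real_Asymp.Real_Asymp"
begin

text \<open>Let \<open>D\<close> be the \<open>\<ell>\<^sub>1\<close>-distance between \<open>\<theta>\<close> and its estimate. Each log-weight
  \<open>log (\<pi>\<^sub>l \<phi>\<^sub>l)\<close> of an observation moves by at most a polynomial in \<open>D\<close>, the largest covariate
  \<open>\<parallel>x\<^sub>i\<parallel>\<^sub>\<infinity>\<close> and the residuals \<open>y\<^sub>i - x\<^sub>i\<^sup>T\<beta>\<^sub>l\<close>, so once \<open>D\<close> is small the supremum in question is at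
  most \<open>C (D A\<^sub>n + D\<^sup>2 A'\<^sub>n)\<close>, where \<open>A\<^sub>n\<close> and \<open>A'\<^sub>n\<close> are sample means of the envelopes
  \<open>(1 + max\<^sub>l \<bar>y\<^sub>i - x\<^sub>i\<^sup>T\<beta>\<^sub>l\<bar>)\<^sup>3 (1 + \<parallel>x\<^sub>i\<parallel>\<^sub>\<infinity>)\<^sup>q\<close> for \<open>q = 2, 3\<close>. Sub-Gaussian covariates give
  \<open>E \<parallel>x\<parallel>\<^sub>\<infinity>\<^sup>2\<^sup>q = O((log p)\<^sup>q)\<close>, the Gaussian components bound the sixth moments of the residuals, and
  AM-GM then yields \<open>E A\<^sub>n = O(log p)\<close> and \<open>E A'\<^sub>n = O((log p)\<^sup>2)\<close>. Since \<open>D = O\<^sub>p(\<eta>)\<close> and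
  \<open>\<eta> log p \<rightarrow> 0\<close> under the rate conditions, Markov's inequality gives the claim.\<close>

section \<open>Perturbation of the responsibilities\<close>

lemma weight_ratio_bounds:
  fixes w :: "nat \<Rightarrow> real"
  assumes "k < K" and "\<forall>l<K. w l > 0"
  shows "0 \<le> w k / (\<Sum>l<K. w l)" and "w k / (\<Sum>l<K. w l) \<le> 1"
proof -
  have "w k \<le> (\<Sum>l<K. w l)" using assms by (intro member_le_sum) auto
  moreover have "(\<Sum>l<K. w l) > 0" using assms by (intro sum_pos) auto
  ultimately show "0 \<le> w k / (\<Sum>l<K. w l)" "w k / (\<Sum>l<K. w l) \<le> 1"
    using assms by auto
qed

lemma abs_diff_le_of_exp_sandwich:
  fixes r r' \<delta> :: real
  assumes r: "0 \<le> r" "r \<le> 1" and r': "r' \<le> 1" and \<delta>: "0 \<le> \<delta>"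
    and lo: "exp (-2 * \<delta>) * r \<le> r'" and up: "r' \<le> exp (2 * \<delta>) * r"
  shows "\<bar>r' - r\<bar> \<le> 8 * \<delta>"
proof -
  have "r' - r \<le> 8 * \<delta>"
  proof (cases "\<delta> \<ge> 1/8")
    case False
    then have "exp (2 * \<delta>) \<le> 1 + 4 * \<delta>"
      using exp_bound_lemma[of "2 * \<delta>"] \<delta> by simp
    then have "exp (2 * \<delta>) * r \<le> r + 4 * \<delta> * r"
      by (metis distrib_right mult_1 mult_right_mono r(1))
    moreover have "4 * \<delta> * r \<le> 4 * \<delta>" using r \<delta> by (simp add: mult_left_le)
    ultimately show ?thesis using up \<delta> by linarith
  qed (use r r' in linarith)
  moreover have "r - r' \<le> 8 * \<delta>"
  proof -
    have "exp (-2 * \<delta>) \<ge> 1 - 2 * \<delta>" using exp_ge_add_one_self[of "-2 * \<delta>"] by simp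
    then have "exp (-2 * \<delta>) * r \<ge> r - 2 * \<delta> * r"
      using r by (metis left_diff_distrib mult_1 mult_right_mono)
    moreover have "2 * \<delta> * r \<le> 2 * \<delta>" using r \<delta> by (simp add: mult_left_le)
    ultimately show ?thesis using lo \<delta> by linarith
  qed
  ultimately show ?thesis by linarith
qed

text \<open>Each normalized weight moves by a factor in \<open>[e\<^sup>-\<^sup>2\<^sup>\<delta>, e\<^sup>2\<^sup>\<delta>]\<close>.\<close>

lemma normalized_weight_perturb:
  fixes w w' :: "nat \<Rightarrow> real"
  assumes k: "k < K" and w: "\<forall>l<K. w l > 0"
    and bnd: "\<forall>l<K. exp (-\<delta>) * w l \<le> w' l \<and> w' l \<le> exp \<delta> * w l" and \<delta>: "\<delta> \<ge> 0"
  shows "\<bar>w' k / (\<Sum>l<K. w' l) - w k / (\<Sum>l<K. w l)\<bar> \<le> 8 * \<delta>"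
proof -
  define S S' where "S = (\<Sum>l<K. w l)" and "S' = (\<Sum>l<K. w' l)"
  have w': "\<forall>l<K. w' l > 0" using w bnd by (meson exp_gt_zero less_le_trans mult_pos_pos)
  have S: "S > 0" "S' > 0" unfolding S_def S'_def using k w w' by (auto intro!: sum_pos)
  have S'_lo: "exp (-\<delta>) * S \<le> S'" and S'_up: "S' \<le> exp \<delta> * S"
    unfolding S_def S'_def sum_distrib_left using bnd by (auto intro!: sum_mono)
  have "w' k / S' \<le> (exp \<delta> * w k) / (exp (-\<delta>) * S)"
    using bnd k S'_lo S w w' by (intro frac_le) auto
  also have "\<dots> = exp (2 * \<delta>) * (w k / S)" by (simp add: exp_minus field_simps exp_add[symmetric])
  finally have up: "w' k / S' \<le> exp (2 * \<delta>) * (w k / S)" .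
  have "(exp (-\<delta>) * w k) / (exp \<delta> * S) \<le> w' k / S'"
    using bnd k S'_up S w w' by (intro frac_le) auto
  moreover have "(exp (-\<delta>) * w k) / (exp \<delta> * S) = exp (-2 * \<delta>) * (w k / S)"
    by (simp add: exp_minus field_simps exp_add[symmetric])
  ultimately have lo: "exp (-2 * \<delta>) * (w k / S) \<le> w' k / S'" by simp
  show ?thesis
    using abs_diff_le_of_exp_sandwich[OF _ _ _ \<delta> lo up] weight_ratio_bounds[OF k w]
      weight_ratio_bounds[OF k w'] unfolding S_def S'_def by blast
qed

lemma abs_ln_diff_le:
  fixes s t t' D :: real
  assumes "s > 0" "t \<ge> s" "\<bar>t' - t\<bar> \<le> D" "D \<le> s/2"
  shows "\<bar>ln t - ln t'\<bar> \<le> 2 * D / s"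
proof -
  have t: "t > 0" "t' \<ge> t/2" using assms by auto
  then have t': "t' > 0" by linarith
  have "ln t - ln t' \<le> (t - t') / t'"
    using ln_le_minus_one[of "t/t'"] t t' by (simp add: ln_div field_simps)
  also have "\<dots> \<le> D / (s/2)" using assms t' t by (intro frac_le) auto
  also have "\<dots> = 2 * D / s" by simp
  finally have 1: "ln t - ln t' \<le> 2 * D / s" .
  have "ln t' - ln t \<le> (t' - t) / t"
    using ln_le_minus_one[of "t'/t"] t t' by (simp add: ln_div field_simps)
  also have "\<dots> \<le> D / (s/2)" using assms t' t by (intro frac_le) auto
  also have "\<dots> = 2 * D / s" by simp
  finally have 2: "ln t' - ln t \<le> 2 * D / s" .
  show ?thesis using 1 2 by linarith
qed

lemma inverse_square_perturb:
  fixes s t t' D :: real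
  assumes "s > 0" "t \<ge> s" "\<bar>t' - t\<bar> \<le> D" "D \<le> s/2"
  shows "\<bar>1/t'\<^sup>2 - 1/t\<^sup>2\<bar> \<le> 10 * D / s^3" and "1/t'\<^sup>2 \<le> 4/s\<^sup>2"
proof -
  have t: "t > 0" "t' \<ge> t/2" "t' \<le> 3 * t/2" using assms by auto
  then have t': "t' > 0" by linarith
  have eq: "1/t'\<^sup>2 - 1/t\<^sup>2 = (t - t') * (t + t') / (t'\<^sup>2 * t\<^sup>2)"
    using t t' by (simp add: field_simps power2_eq_square)
  have "\<bar>(t - t') * (t + t')\<bar> = \<bar>t' - t\<bar> * (t + t')" using t t' by (simp add: abs_mult abs_minus_commute)
  also have "\<dots> \<le> D * (5 * t/2)" using assms t t' by (intro mult_mono) auto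
  finally have "\<bar>(t - t') * (t + t')\<bar> \<le> D * (5 * t/2)" .
  moreover have "t'\<^sup>2 * t\<^sup>2 \<ge> (t/2)\<^sup>2 * t\<^sup>2" using t by (intro mult_right_mono power_mono) auto
  ultimately have "\<bar>1/t'\<^sup>2 - 1/t\<^sup>2\<bar> \<le> D * (5 * t/2) / ((t/2)\<^sup>2 * t\<^sup>2)"
    unfolding eq abs_divide using t t' assms by (intro frac_le) (auto simp: abs_mult)
  also have "\<dots> = 10 * D / t^3" using t by (simp add: field_simps power2_eq_square power3_eq_cube)
  also have "\<dots> \<le> 10 * D / s^3" using assms t by (intro divide_left_mono power_mono) auto
  finally show "\<bar>1/t'\<^sup>2 - 1/t\<^sup>2\<bar> \<le> 10 * D / s^3" .
  have "t'\<^sup>2 \<ge> (s/2)\<^sup>2" using t assms by (intro power_mono) auto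
  then show "1/t'\<^sup>2 \<le> 4/s\<^sup>2" using assms t' by (simp add: field_simps power2_eq_square)
qed

lemma gaussian_exponent_perturb:
  fixes e d a s t t' D dd :: real
  assumes "\<bar>e\<bar> \<le> a" "\<bar>d\<bar> \<le> dd" "s > 0" "t \<ge> s" "\<bar>t' - t\<bar> \<le> D" "D \<le> s/2"
  shows "\<bar>(e - d)\<^sup>2 / (2 * t'\<^sup>2) - e\<^sup>2 / (2 * t\<^sup>2)\<bar> \<le> (2/s\<^sup>2) * (2 * a * dd + dd\<^sup>2) + 5 * a\<^sup>2 * D / s^3"
proof -
  note inv = inverse_square_perturb[OF assms(3-6)]
  have a: "a \<ge> 0" and dd: "dd \<ge> 0" using assms(1,2) by linarith+
  have "t' \<noteq> 0" using assms(3-6) by auto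
  then have eq: "(e - d)\<^sup>2 / (2 * t'\<^sup>2) - e\<^sup>2 / (2 * t\<^sup>2)
      = - (d * (2 * e - d)) * (1/t'\<^sup>2) / 2 + e\<^sup>2 * (1/t'\<^sup>2 - 1/t\<^sup>2) / 2"
    by (simp add: field_simps power2_eq_square)
  have "\<bar>d * (2 * e - d)\<bar> \<le> dd * (2 * a + dd)"
    unfolding abs_mult using assms a dd by (intro mult_mono) (auto simp: abs_le_iff)
  then have "\<bar>d * (2 * e - d)\<bar> * (1/t'\<^sup>2) / 2 \<le> dd * (2 * a + dd) * (4/s\<^sup>2) / 2"
    using inv(2) a dd by (intro divide_right_mono mult_mono) auto
  moreover have "\<bar>- (d * (2 * e - d)) * (1/t'\<^sup>2) / 2\<bar> = \<bar>d * (2 * e - d)\<bar> * (1/t'\<^sup>2) / 2"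
    by (simp add: abs_mult)
  ultimately have 1: "\<bar>- (d * (2 * e - d)) * (1/t'\<^sup>2) / 2\<bar> \<le> dd * (2 * a + dd) * (4/s\<^sup>2) / 2"
    by (simp only:)
  have "e\<^sup>2 \<le> a\<^sup>2" using assms(1) a by (metis abs_le_square_iff abs_of_nonneg)
  then have "e\<^sup>2 * \<bar>1/t'\<^sup>2 - 1/t\<^sup>2\<bar> / 2 \<le> a\<^sup>2 * (10 * D / s^3) / 2"
    using inv(1) by (intro divide_right_mono mult_mono) auto
  moreover have "\<bar>e\<^sup>2 * (1/t'\<^sup>2 - 1/t\<^sup>2) / 2\<bar> = e\<^sup>2 * \<bar>1/t'\<^sup>2 - 1/t\<^sup>2\<bar> / 2"
    by (simp add: abs_mult)
  ultimately have 2: "\<bar>e\<^sup>2 * (1/t'\<^sup>2 - 1/t\<^sup>2) / 2\<bar> \<le> a\<^sup>2 * (10 * D / s^3) / 2"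
    by (simp only:)
  have "\<bar>(e - d)\<^sup>2 / (2 * t'\<^sup>2) - e\<^sup>2 / (2 * t\<^sup>2)\<bar>
      \<le> dd * (2 * a + dd) * (4/s\<^sup>2) / 2 + a\<^sup>2 * (10 * D / s^3) / 2"
    unfolding eq using 1 2 by (rule order_trans[OF abs_triangle_ineq add_mono])
  also have "\<dots> = (2/s\<^sup>2) * (2 * a * dd + dd\<^sup>2) + 5 * a\<^sup>2 * D / s^3"
    using assms(3) by (simp add: field_simps power2_eq_square)
  finally show ?thesis .
qed

lemma inner_p_diff: "inner_p p x u - inner_p p x v = inner_p p x (\<lambda>j. u j - v j)"
  unfolding inner_p_def by (simp add: sum_subtractf right_diff_distrib)

lemma abs_inner_p_le_norm1:
  assumes "\<forall>j<p. \<bar>x j\<bar> \<le> m"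
  shows "\<bar>inner_p p x v\<bar> \<le> m * norm1_p p v"
proof -
  have "\<bar>inner_p p x v\<bar> \<le> (\<Sum>j<p. \<bar>x j * v j\<bar>)" unfolding inner_p_def by (rule sum_abs)
  also have "\<dots> \<le> (\<Sum>j<p. m * \<bar>v j\<bar>)"
    using assms by (intro sum_mono) (auto simp: abs_mult intro: mult_right_mono)
  finally show ?thesis unfolding norm1_p_def by (simp add: sum_distrib_left)
qed

lemma resp_eq_normalized_weight:
  assumes "K > 0"
  shows "resp K p al be sg x y k = exp (inner_p p x (al k)) * comp_dens p be sg x y k
      / (\<Sum>l<K. exp (inner_p p x (al l)) * comp_dens p be sg x y l)"
proof -
  have "(\<Sum>l<K. exp (inner_p p x (al l))) > 0" using assms by (intro sum_pos) auto
  then show ?thesis unfolding resp_def gate_def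
    by (simp add: sum_divide_distrib[symmetric] field_simps)
qed

lemma gated_density_perturb:
  fixes al be alh beh :: "nat \<Rightarrow> nat \<Rightarrow> real" and sg sgh :: "nat \<Rightarrow> real"
  assumes s: "s > 0" "sg l \<ge> s" and D: "D \<le> s/2" "\<bar>sgh l - sg l\<bar> \<le> D"
    and dal: "\<bar>inner_p p x (alh l) - inner_p p x (al l)\<bar> \<le> dd"
    and dbe: "\<bar>inner_p p x (beh l) - inner_p p x (be l)\<bar> \<le> dd"
    and res: "\<bar>y - inner_p p x (be l)\<bar> \<le> a"
  defines "w \<equiv> exp (inner_p p x (al l)) * comp_dens p be sg x y l"
    and "w' \<equiv> exp (inner_p p x (alh l)) * comp_dens p beh sgh x y l"
    and "\<delta> \<equiv> dd + 2 * D / s + ((2/s\<^sup>2) * (2 * a * dd + dd\<^sup>2) + 5 * a\<^sup>2 * D / s^3)"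
  shows "exp (-\<delta>) * w \<le> w'" and "w' \<le> exp \<delta> * w"
proof -
  define A A' where "A = inner_p p x (al l)" and "A' = inner_p p x (alh l)"
  define q q' where "q = (y - inner_p p x (be l))\<^sup>2 / (2 * (sg l)\<^sup>2)"
    and "q' = (y - inner_p p x (beh l))\<^sup>2 / (2 * (sgh l)\<^sup>2)"
  define E where "E = (A' - A) + (ln (sg l) - ln (sgh l)) - (q' - q)"
  have sg: "sg l > 0" "sgh l > 0" using s D by (auto simp: abs_le_iff)
  have "w' = w * exp E"
  proof -
    have "exp E = exp (A' - A) * (sg l / sgh l) * exp (q - q')"
      unfolding E_def using sg by (simp add: exp_add exp_diff ln_div[symmetric])
    then show ?thesis
      unfolding w_def w'_def comp_dens_def minus_divide_left[symmetric] A_def[symmetric]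
        A'_def[symmetric] q_def[symmetric] q'_def[symmetric] using sg
      by (simp add: exp_diff exp_minus field_simps)
  qed
  moreover have "\<bar>E\<bar> \<le> \<delta>"
  proof -
    have "\<bar>ln (sg l) - ln (sgh l)\<bar> \<le> 2 * D / s" using abs_ln_diff_le s D by blast
    moreover have "\<bar>q' - q\<bar> \<le> (2/s\<^sup>2) * (2 * a * dd + dd\<^sup>2) + 5 * a\<^sup>2 * D / s^3"
      unfolding q_def q'_def
      using gaussian_exponent_perturb[OF res dbe s D(2,1)] by (simp add: algebra_simps)
    ultimately show ?thesis using dal unfolding E_def \<delta>_def A_def A'_def by (simp add: abs_le_iff)
  qed
  then have "exp (-\<delta>) \<le> exp E" "exp E \<le> exp \<delta>" by (auto simp: abs_le_iff)
  moreover have "w > 0" unfolding w_def comp_dens_def using sg by simp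
  ultimately show "exp (-\<delta>) * w \<le> w'" "w' \<le> exp \<delta> * w" by (auto simp: mult.commute)
qed

lemma resp_bounds:
  assumes "k < K" and "\<forall>l<K. sg l > 0"
  shows "0 \<le> resp K p al be sg x y k" and "resp K p al be sg x y k \<le> 1"
proof -
  have "\<forall>l<K. exp (inner_p p x (al l)) * comp_dens p be sg x y l > 0"
    using assms unfolding comp_dens_def by simp
  then show "0 \<le> resp K p al be sg x y k" "resp K p al be sg x y k \<le> 1"
    using weight_ratio_bounds[OF assms(1)] resp_eq_normalized_weight assms(1) by auto
qed

lemma resp_perturb:
  assumes k: "k < K" and s: "s > 0" "\<forall>l<K. sg l \<ge> s"
    and D: "D \<le> s/2" "\<forall>l<K. \<bar>sgh l - sg l\<bar> \<le> D"
    and dal: "\<forall>l<K. \<bar>inner_p p x (alh l) - inner_p p x (al l)\<bar> \<le> dd"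
    and dbe: "\<forall>l<K. \<bar>inner_p p x (beh l) - inner_p p x (be l)\<bar> \<le> dd"
    and res: "\<forall>l<K. \<bar>y - inner_p p x (be l)\<bar> \<le> a"
  shows "\<bar>resp K p alh beh sgh x y k - resp K p al be sg x y k\<bar>
    \<le> 8 * (dd + 2 * D / s + ((2/s\<^sup>2) * (2 * a * dd + dd\<^sup>2) + 5 * a\<^sup>2 * D / s^3))"
proof -
  define \<delta> where "\<delta> = dd + 2 * D / s + ((2/s\<^sup>2) * (2 * a * dd + dd\<^sup>2) + 5 * a\<^sup>2 * D / s^3)"
  have K: "K > 0" using k by simp
  have "\<bar>inner_p p x (alh k) - inner_p p x (al k)\<bar> \<le> dd" "\<bar>sgh k - sg k\<bar> \<le> D"
    using dal D k by auto
  then have \<delta>0: "0 \<le> \<delta>" unfolding \<delta>_def using s res k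
    by (smt (verit) abs_ge_zero divide_nonneg_nonneg mult_nonneg_nonneg zero_le_power zero_le_power2)
  have "\<bar>resp K p alh beh sgh x y k - resp K p al be sg x y k\<bar> \<le> 8 * \<delta>"
    unfolding resp_eq_normalized_weight[OF K]
  proof (rule normalized_weight_perturb[OF k _ _ \<delta>0])
    show "\<forall>l<K. exp (inner_p p x (al l)) * comp_dens p be sg x y l > 0"
      using s unfolding comp_dens_def by (auto intro: less_le_trans)
    show "\<forall>l<K. exp (-\<delta>) * (exp (inner_p p x (al l)) * comp_dens p be sg x y l)
          \<le> exp (inner_p p x (alh l)) * comp_dens p beh sgh x y l
        \<and> exp (inner_p p x (alh l)) * comp_dens p beh sgh x y l
          \<le> exp \<delta> * (exp (inner_p p x (al l)) * comp_dens p be sg x y l)"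
      unfolding \<delta>_def
      by (intro allI impI conjI; rule gated_density_perturb[OF s(1) _ D(1)]) (use s D dal dbe res in auto)
  qed
  then show ?thesis unfolding \<delta>_def .
qed

lemma score_perturbation_polynomial_le:
  fixes s a m D :: real
  assumes s: "s > 0" and a: "a \<ge> 0" and m: "m \<ge> 0" and D: "D \<ge> 0"
  shows "(8 * (m * D + 2 * D / s + ((2/s\<^sup>2) * (2 * a * (m * D) + (m * D)\<^sup>2) + 5 * a\<^sup>2 * D / s^3))
            * (4/s\<^sup>2) + 10 * D / s^3) * a * m
    \<le> 400 * (1 + 1/s)^5 * (D * (1+a)^3 * (1+m)^2 + D\<^sup>2 * (1+a)^3 * (1+m)^3)"
proof -
  define u where "u = 1/s"
  have u: "0 \<le> u" "u \<le> 1 + 1/s" "1 \<le> 1 + 1/s" using s unfolding u_def by auto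
  have mon: "u^i * a^j * m^l \<le> (1 + 1/s)^5 * (1+a)^3 * (1+m)^l" if "i \<le> 5" "j \<le> 3" for i j l
  proof -
    have "u^i \<le> (1 + 1/s)^i" using u by (intro power_mono) auto
    also have "\<dots> \<le> (1 + 1/s)^5" using u that by (intro power_increasing) auto
    finally have 1: "u^i \<le> (1 + 1/s)^5" .
    have "a^j \<le> (1+a)^j" using a by (intro power_mono) auto
    also have "\<dots> \<le> (1+a)^3" using a that by (intro power_increasing) auto
    finally have 2: "a^j \<le> (1+a)^3" .
    have 3: "m^l \<le> (1+m)^l" using m by (intro power_mono) auto
    show ?thesis using 1 2 3 u a m by (intro mult_mono) auto
  qed
  let ?B2 = "(1 + 1/s)^5 * (1+a)^3 * (1+m)^2" and ?B3 = "(1 + 1/s)^5 * (1+a)^3 * (1+m)^3"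
  have "(1 + 1/s)^5 * (1+a)^3 * (1+m)^1 \<le> ?B2"
    using m a s by (intro mult_left_mono power_increasing) auto
  then have mon311: "u^3 * a^1 * m^1 \<le> ?B2" and mon531: "u^5 * a^3 * m^1 \<le> ?B2"
    using mon[of 3 1 1] mon[of 5 3 1] by auto
  have "(8 * (m * D + 2 * D / s + ((2/s\<^sup>2) * (2 * a * (m * D) + (m * D)\<^sup>2) + 5 * a\<^sup>2 * D / s^3))
            * (4/s\<^sup>2) + 10 * D / s^3) * a * m
      = 32 * (u^2 * a^1 * m^2) * D + 64 * (u^3 * a^1 * m^1) * D + 128 * (u^4 * a^2 * m^2) * D
        + 64 * (u^4 * a^1 * m^3) * D\<^sup>2 + 160 * (u^5 * a^3 * m^1) * D + 10 * (u^3 * a^1 * m^1) * D"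
    unfolding u_def by (simp add: algebra_simps power2_eq_square power3_eq_cube power4_eq_xxxx
        numeral_eq_Suc)
  also have "\<dots> \<le> 394 * ?B2 * D + 64 * ?B3 * D\<^sup>2"
    using mult_right_mono[OF mon[of 2 1 2] D] mult_right_mono[OF mon311 D]
      mult_right_mono[OF mon[of 4 2 2] D] mult_right_mono[OF mon[of 4 1 3] zero_le_power2[of D]]
      mult_right_mono[OF mon531 D] by linarith
  also have "\<dots> \<le> 400 * (1 + 1/s)^5 * (D * (1+a)^3 * (1+m)^2 + D\<^sup>2 * (1+a)^3 * (1+m)^3)"
    using s a m D by (simp add: algebra_simps)
  finally show ?thesis .
qed

lemma score_term_perturb:
  fixes al be alh beh :: "nat \<Rightarrow> nat \<Rightarrow> real" and sg sgh :: "nat \<Rightarrow> real"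
  assumes k: "k < K" and s: "s > 0" "\<forall>l<K. sg l \<ge> s" and D: "D \<le> s/2"
    and dbe: "\<forall>l<K. norm1_p p (\<lambda>j. beh l j - be l j) \<le> D"
    and dal: "\<forall>l<K. norm1_p p (\<lambda>j. alh l j - al l j) \<le> D"
    and dsg: "\<forall>l<K. \<bar>sgh l - sg l\<bar> \<le> D"
    and x: "\<forall>j<p. \<bar>x j\<bar> \<le> m" and res: "\<forall>l<K. \<bar>y - inner_p p x (be l)\<bar> \<le> a" and j: "j < p"
  shows "\<bar>(resp K p alh beh sgh x y k / (sgh k)\<^sup>2 - resp K p al be sg x y k / (sg k)\<^sup>2)
           * (y - inner_p p x (be k)) * x j\<bar>
         \<le> 400 * (1 + 1/s)^5 * (D * (1+a)^3 * (1+m)^2 + D\<^sup>2 * (1+a)^3 * (1+m)^3)"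
proof -
  have D0: "D \<ge> 0" using dsg k by (meson abs_ge_zero order_trans)
  have m: "m \<ge> 0" using x j by (meson abs_ge_zero order_trans)
  have a: "a \<ge> 0" using res k by (meson abs_ge_zero order_trans)
  have inner_le: "\<bar>inner_p p x (u' l) - inner_p p x (u l)\<bar> \<le> m * D"
    if "norm1_p p (\<lambda>j. u' l j - u l j) \<le> D" for u u' :: "nat \<Rightarrow> nat \<Rightarrow> real" and l
    unfolding inner_p_diff using abs_inner_p_le_norm1[OF x] that m
    by (meson mult_left_mono order_trans)
  define \<delta> where "\<delta> = m * D + 2 * D / s + ((2/s\<^sup>2) * (2 * a * (m * D) + (m * D)\<^sup>2) + 5 * a\<^sup>2 * D / s^3)"
  define r r' where "r = resp K p al be sg x y k" and "r' = resp K p alh beh sgh x y k"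
  have rr: "\<bar>r' - r\<bar> \<le> 8 * \<delta>"
    unfolding r_def r'_def \<delta>_def using inner_le dal dbe
    by (intro resp_perturb[OF k s D dsg _ _ res]) auto
  have "\<forall>l<K. sg l > 0" using s by (auto intro: less_le_trans)
  then have r: "0 \<le> r" "r \<le> 1" unfolding r_def by (rule resp_bounds[OF k])+
  note inv = inverse_square_perturb[of s "sg k" "sgh k" D]
  have "\<bar>r'/(sgh k)\<^sup>2 - r/(sg k)\<^sup>2\<bar>
      = \<bar>(r' - r) * (1/(sgh k)\<^sup>2) + r * (1/(sgh k)\<^sup>2 - 1/(sg k)\<^sup>2)\<bar>"
    by (simp add: algebra_simps diff_divide_distrib)
  also have "\<dots> \<le> \<bar>r' - r\<bar> * (1/(sgh k)\<^sup>2) + r * \<bar>1/(sgh k)\<^sup>2 - 1/(sg k)\<^sup>2\<bar>"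
    using r by (simp add: abs_mult abs_triangle_ineq[THEN order_trans])
  also have "\<dots> \<le> 8 * \<delta> * (4/s\<^sup>2) + 1 * (10 * D / s^3)"
    using rr r inv s D dsg k by (intro add_mono mult_mono) auto
  finally have main: "\<bar>r'/(sgh k)\<^sup>2 - r/(sg k)\<^sup>2\<bar> \<le> 8 * \<delta> * (4/s\<^sup>2) + 10 * D / s^3" by simp
  have "\<bar>(r'/(sgh k)\<^sup>2 - r/(sg k)\<^sup>2) * (y - inner_p p x (be k)) * x j\<bar>
      \<le> (8 * \<delta> * (4/s\<^sup>2) + 10 * D / s^3) * a * m"
    unfolding abs_mult using main res x k j a m by (intro mult_mono) auto
  also have "\<dots> \<le> 400 * (1 + 1/s)^5 * (D * (1+a)^3 * (1+m)^2 + D\<^sup>2 * (1+a)^3 * (1+m)^3)"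
    unfolding \<delta>_def by (rule score_perturbation_polynomial_le[OF s(1) a m D0])
  finally show ?thesis unfolding r_def r'_def .
qed

section \<open>Sup norms and the deterministic bound\<close>

definition sup_norm_p :: "nat \<Rightarrow> (nat \<Rightarrow> real) \<Rightarrow> real" where
  "sup_norm_p p x = Max (insert 0 ((\<lambda>j. \<bar>x j\<bar>) ` {..<p}))"

definition moe_param_dist :: "nat \<Rightarrow> nat \<Rightarrow> (nat \<Rightarrow> nat \<Rightarrow> real) \<Rightarrow> (nat \<Rightarrow> nat \<Rightarrow> real) \<Rightarrow> (nat \<Rightarrow> real)
    \<Rightarrow> (nat \<Rightarrow> nat \<Rightarrow> real) \<Rightarrow> (nat \<Rightarrow> nat \<Rightarrow> real) \<Rightarrow> (nat \<Rightarrow> real) \<Rightarrow> real" where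
  "moe_param_dist K p al be sg al' be' sg' =
     Max ((\<lambda>l. norm1_p p (\<lambda>j. be' l j - be l j) + norm1_p p (\<lambda>j. al' l j - al l j) + \<bar>sg' l - sg l\<bar>) ` {..<K})"

definition moe_envelope :: "nat \<Rightarrow> nat \<Rightarrow> (nat \<Rightarrow> nat \<Rightarrow> real) \<Rightarrow> nat \<Rightarrow> (nat \<Rightarrow> real) \<Rightarrow> real \<Rightarrow> real" where
  "moe_envelope K p be q x y = (1 + sup_norm_p K (\<lambda>l. y - inner_p p x (be l)))^3 * (1 + sup_norm_p p x)^q"

lemma sup_norm_p_cases: "sup_norm_p p x = 0 \<or> (\<exists>j<p. sup_norm_p p x = \<bar>x j\<bar>)"
proof -
  have "sup_norm_p p x \<in> insert 0 ((\<lambda>j. \<bar>x j\<bar>) ` {..<p})" unfolding sup_norm_p_def by (intro Max_in) auto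
  then show ?thesis by auto
qed

lemma abs_le_sup_norm_p: "j < p \<Longrightarrow> \<bar>x j\<bar> \<le> sup_norm_p p x"
  unfolding sup_norm_p_def by (intro Max_ge) auto

lemma sup_norm_p_nonneg: "0 \<le> sup_norm_p p x"
  unfolding sup_norm_p_def by (intro Max_ge) auto

lemma sup_norm_p_le: "(\<And>j. j < p \<Longrightarrow> \<bar>x j\<bar> \<le> c) \<Longrightarrow> 0 \<le> c \<Longrightarrow> sup_norm_p p x \<le> c"
  unfolding sup_norm_p_def by (intro Max.boundedI) auto

lemma sup_norm_p_power_le_sum:
  assumes "q > 0"
  shows "(sup_norm_p p x)^q \<le> (\<Sum>j<p. \<bar>x j\<bar>^q)"
  using sup_norm_p_cases[of p x]
proof
  assume "sup_norm_p p x = 0"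
  then show ?thesis using assms by (simp add: power_0_left sum_nonneg)
next
  assume "\<exists>j<p. sup_norm_p p x = \<bar>x j\<bar>"
  then obtain j where "j < p" "sup_norm_p p x = \<bar>x j\<bar>" by auto
  then show ?thesis by (auto intro: member_le_sum)
qed

lemma borel_measurable_sup_norm_p[measurable]:
  fixes f :: "'a \<Rightarrow> nat \<Rightarrow> real"
  assumes [measurable]: "\<And>j. (\<lambda>\<omega>. f \<omega> j) \<in> borel_measurable M"
  shows "(\<lambda>\<omega>. sup_norm_p p (f \<omega>)) \<in> borel_measurable M"
proof (cases "p = 0")
  case False
  then have "sup_norm_p p (f \<omega>) = max 0 (Max ((\<lambda>j. \<bar>f \<omega> j\<bar>) ` {..<p}))" for \<omega>
    unfolding sup_norm_p_def by (subst Max_insert) auto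
  moreover have "(\<lambda>\<omega>. Max ((\<lambda>j. \<bar>f \<omega> j\<bar>) ` {..<p})) \<in> borel_measurable M"
    using False by (intro borel_measurable_Max) auto
  ultimately show ?thesis by simp
qed (simp add: sup_norm_p_def)

lemma moe_param_dist_ge:
  assumes "l < K"
  shows "norm1_p p (\<lambda>j. be' l j - be l j) \<le> moe_param_dist K p al be sg al' be' sg'"
    and "norm1_p p (\<lambda>j. al' l j - al l j) \<le> moe_param_dist K p al be sg al' be' sg'"
    and "\<bar>sg' l - sg l\<bar> \<le> moe_param_dist K p al be sg al' be' sg'"
proof -
  have "norm1_p p u \<ge> 0" for u unfolding norm1_p_def by (simp add: sum_nonneg)
  moreover have "norm1_p p (\<lambda>j. be' l j - be l j) + norm1_p p (\<lambda>j. al' l j - al l j) + \<bar>sg' l - sg l\<bar>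
      \<le> moe_param_dist K p al be sg al' be' sg'"
    unfolding moe_param_dist_def using assms by (intro Max_ge) auto
  ultimately show "norm1_p p (\<lambda>j. be' l j - be l j) \<le> moe_param_dist K p al be sg al' be' sg'"
    and "norm1_p p (\<lambda>j. al' l j - al l j) \<le> moe_param_dist K p al be sg al' be' sg'"
    and "\<bar>sg' l - sg l\<bar> \<le> moe_param_dist K p al be sg al' be' sg'"
    by (smt (verit))+
qed

lemma moe_param_dist_nonneg: "k < K \<Longrightarrow> 0 \<le> moe_param_dist K p al be sg al' be' sg'"
  using moe_param_dist_ge(3) by (meson abs_ge_zero order_trans)

lemma borel_measurable_moe_param_dist[measurable]:
  fixes al' be' :: "'a \<Rightarrow> nat \<Rightarrow> nat \<Rightarrow> real" and sg' :: "'a \<Rightarrow> nat \<Rightarrow> real"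
  assumes "\<And>l j. (\<lambda>\<omega>. al' \<omega> l j) \<in> borel_measurable M" "\<And>l j. (\<lambda>\<omega>. be' \<omega> l j) \<in> borel_measurable M"
    and "\<And>l. (\<lambda>\<omega>. sg' \<omega> l) \<in> borel_measurable M"
  shows "(\<lambda>\<omega>. moe_param_dist K p al be sg (al' \<omega>) (be' \<omega>) (sg' \<omega>)) \<in> borel_measurable M"
  unfolding moe_param_dist_def norm1_p_def using assms by (intro borel_measurable_Max) auto

lemma moe_envelope_nonneg: "0 \<le> moe_envelope K p be q x y"
  unfolding moe_envelope_def by (intro mult_nonneg_nonneg zero_le_power add_nonneg_nonneg) (auto simp: sup_norm_p_nonneg)

lemma score_diff_sup_norm_le:
  fixes Xs :: "nat \<Rightarrow> nat \<Rightarrow> real" and Ys :: "nat \<Rightarrow> real"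
    and al be alh beh :: "nat \<Rightarrow> nat \<Rightarrow> real" and sg sgh :: "nat \<Rightarrow> real"
  assumes k: "k < K" and s: "s > 0" "\<forall>l<K. sg l \<ge> s"
    and D: "moe_param_dist K p al be sg alh beh sgh \<le> s/2"
  defines "D \<equiv> moe_param_dist K p al be sg alh beh sgh"
  shows "sup_norm_p p (\<lambda>j. (1 / real n) * (\<Sum>i<n.
            (resp K p alh beh sgh (Xs i) (Ys i) k / (sgh k)\<^sup>2
             - resp K p al be sg (Xs i) (Ys i) k / (sg k)\<^sup>2)
            * (Ys i - inner_p p (Xs i) (be k)) * Xs i j))
    \<le> 400 * (1 + 1/s)^5 * (D * ((1 / real n) * (\<Sum>i<n. moe_envelope K p be 2 (Xs i) (Ys i)))
          + D\<^sup>2 * ((1 / real n) * (\<Sum>i<n. moe_envelope K p be 3 (Xs i) (Ys i))))"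
    (is "_ \<le> ?R")
proof -
  define a where "a i = sup_norm_p K (\<lambda>l. Ys i - inner_p p (Xs i) (be l))" for i
  define m where "m i = sup_norm_p p (Xs i)" for i
  define Cs where "Cs = 400 * (1 + 1/s)^5"
  have summand_le: "\<bar>(resp K p alh beh sgh (Xs i) (Ys i) k / (sgh k)\<^sup>2
        - resp K p al be sg (Xs i) (Ys i) k / (sg k)\<^sup>2) * (Ys i - inner_p p (Xs i) (be k)) * Xs i j\<bar>
      \<le> Cs * (D * (1 + a i)^3 * (1 + m i)^2 + D\<^sup>2 * (1 + a i)^3 * (1 + m i)^3)" if "j < p" for i j
    unfolding Cs_def a_def m_def D_def using moe_param_dist_ge D
    by (intro score_term_perturb[OF k s _ _ _ _ _ _ that]) (auto intro: abs_le_sup_norm_p)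
  have "0 \<le> D" using moe_param_dist_ge(3)[OF k] unfolding D_def by (meson abs_ge_zero order_trans)
  then have R: "0 \<le> ?R" unfolding moe_envelope_def using s
    by (intro mult_nonneg_nonneg add_nonneg_nonneg sum_nonneg zero_le_power)
      (auto intro: add_nonneg_nonneg sup_norm_p_nonneg)
  show ?thesis
  proof (rule sup_norm_p_le[OF _ R])
    fix j assume j: "j < p"
    have "\<bar>(1 / real n) * (\<Sum>i<n. (resp K p alh beh sgh (Xs i) (Ys i) k / (sgh k)\<^sup>2
             - resp K p al be sg (Xs i) (Ys i) k / (sg k)\<^sup>2) * (Ys i - inner_p p (Xs i) (be k)) * Xs i j)\<bar>
        = (1 / real n) * \<bar>\<Sum>i<n. (resp K p alh beh sgh (Xs i) (Ys i) k / (sgh k)\<^sup>2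
             - resp K p al be sg (Xs i) (Ys i) k / (sg k)\<^sup>2) * (Ys i - inner_p p (Xs i) (be k)) * Xs i j\<bar>"
      by (simp add: abs_mult)
    also have "\<dots> \<le> (1 / real n) * (\<Sum>i<n. Cs * (D * (1 + a i)^3 * (1 + m i)^2 + D\<^sup>2 * (1 + a i)^3 * (1 + m i)^3))"
      by (intro mult_left_mono order_trans[OF sum_abs] sum_mono summand_le j) auto
    also have "\<dots> = ?R" unfolding Cs_def moe_envelope_def a_def m_def
      by (simp add: sum.distrib sum_distrib_left algebra_simps)
    finally show "\<bar>(1 / real n) * (\<Sum>i<n. (resp K p alh beh sgh (Xs i) (Ys i) k / (sgh k)\<^sup>2
             - resp K p al be sg (Xs i) (Ys i) k / (sg k)\<^sup>2) * (Ys i - inner_p p (Xs i) (be k)) * Xs i j)\<bar>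
        \<le> ?R" .
  qed
qed

section \<open>Nonnegative integrals and Markov's inequality\<close>

lemma nn_integral_sum_cmult:
  fixes f :: "'i \<Rightarrow> 'a \<Rightarrow> real"
  assumes "finite I" and "\<forall>i\<in>I. f i \<in> borel_measurable M" and "\<forall>i\<in>I. \<forall>x. f i x \<ge> 0"
    and "\<forall>i\<in>I. c i \<ge> 0"
  shows "(\<integral>\<^sup>+x. ennreal (\<Sum>i\<in>I. c i * f i x) \<partial>M) = (\<Sum>i\<in>I. ennreal (c i) * (\<integral>\<^sup>+x. ennreal (f i x) \<partial>M))"
proof -
  have "(\<integral>\<^sup>+x. ennreal (\<Sum>i\<in>I. c i * f i x) \<partial>M) = (\<integral>\<^sup>+x. (\<Sum>i\<in>I. ennreal (c i) * ennreal (f i x)) \<partial>M)"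
    using assms by (intro nn_integral_cong) (simp add: sum_ennreal[symmetric] ennreal_mult del: sum_ennreal)
  also have "\<dots> = (\<Sum>i\<in>I. ennreal (c i) * (\<integral>\<^sup>+x. ennreal (f i x) \<partial>M))"
    using assms by (subst nn_integral_sum) (auto intro!: sum.cong nn_integral_cmult)
  finally show ?thesis .
qed

lemma nn_integral_ennreal_cmult:
  assumes "c \<ge> 0" and "f \<in> borel_measurable M"
  shows "(\<integral>\<^sup>+x. ennreal (c * f x) \<partial>M) = ennreal c * (\<integral>\<^sup>+x. ennreal (f x) \<partial>M)"
  using assms by (simp add: ennreal_mult' nn_integral_cmult)

lemma (in prob_space) nn_integral_le_linear_combination:
  fixes f :: "'i \<Rightarrow> 'a \<Rightarrow> real" and h :: "'a \<Rightarrow> real"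
  assumes I: "finite I" and f: "\<forall>i\<in>I. f i \<in> borel_measurable M" "\<forall>i\<in>I. \<forall>x. f i x \<ge> 0"
    and c: "\<forall>i\<in>I. c i \<ge> 0" "c0 \<ge> 0" and r: "\<forall>i\<in>I. r i \<ge> 0"
    and fr: "\<forall>i\<in>I. (\<integral>\<^sup>+x. ennreal (f i x) \<partial>M) \<le> ennreal (r i)"
    and h: "\<forall>x\<in>space M. h x \<le> c0 + (\<Sum>i\<in>I. c i * f i x)"
  shows "(\<integral>\<^sup>+x. ennreal (h x) \<partial>M) \<le> ennreal (c0 + (\<Sum>i\<in>I. c i * r i))"
proof -
  have sum_nonneg': "0 \<le> (\<Sum>i\<in>I. c i * f i x)" for x using f c by (intro sum_nonneg) auto
  have "(\<integral>\<^sup>+x. ennreal (h x) \<partial>M) \<le> (\<integral>\<^sup>+x. ennreal c0 + ennreal (\<Sum>i\<in>I. c i * f i x) \<partial>M)"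
    using h c sum_nonneg' by (intro nn_integral_mono) (simp add: ennreal_plus[symmetric] del: ennreal_plus)
  also have "\<dots> = ennreal c0 + (\<Sum>i\<in>I. ennreal (c i) * (\<integral>\<^sup>+x. ennreal (f i x) \<partial>M))"
    using f by (subst nn_integral_add)
      (auto simp: nn_integral_sum_cmult[OF I f c(1)] emeasure_space_1
        intro!: measurable_compose[OF _ measurable_ennreal] borel_measurable_sum)
  also have "\<dots> \<le> ennreal c0 + (\<Sum>i\<in>I. ennreal (c i) * ennreal (r i))"
    using fr by (intro add_left_mono sum_mono mult_left_mono) auto
  also have "\<dots> = ennreal (c0 + (\<Sum>i\<in>I. c i * r i))"
    using c r by (simp add: ennreal_mult[symmetric] sum_ennreal ennreal_plus[symmetric] sum_nonneg
        del: ennreal_plus)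
  finally show ?thesis .
qed

lemma (in prob_space) nn_integral_average_le:
  fixes H :: "nat \<Rightarrow> 'a \<Rightarrow> real"
  assumes "\<forall>i<n. H i \<in> borel_measurable M" "\<forall>i<n. \<forall>\<omega>. H i \<omega> \<ge> 0"
    and "\<forall>i<n. (\<integral>\<^sup>+\<omega>. ennreal (H i \<omega>) \<partial>M) \<le> ennreal r" "r \<ge> 0"
  shows "(\<integral>\<^sup>+\<omega>. ennreal ((1 / real n) * (\<Sum>i<n. H i \<omega>)) \<partial>M) \<le> ennreal r"
proof -
  have "(\<integral>\<^sup>+\<omega>. ennreal ((1 / real n) * (\<Sum>i<n. H i \<omega>)) \<partial>M) \<le> ennreal (0 + (\<Sum>i\<in>{..<n}. (1 / real n) * r))"
    using assms by (intro nn_integral_le_linear_combination) (auto simp: sum_distrib_left)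
  also have "\<dots> \<le> ennreal r" using assms by (cases "n = 0") auto
  finally show ?thesis .
qed

lemma (in prob_space) prob_ge_le_Markov:
  fixes f :: "'a \<Rightarrow> real"
  assumes f: "f \<in> borel_measurable M" and t: "t > 0" and r: "r \<ge> 0"
    and E: "(\<integral>\<^sup>+\<omega>. ennreal (f \<omega>) \<partial>M) \<le> ennreal r"
  shows "prob {\<omega> \<in> space M. t \<le> f \<omega>} \<le> r / t"
proof -
  have "{\<omega> \<in> space M. t \<le> f \<omega>} \<in> events" using f by measurable
  then have "emeasure M {\<omega> \<in> space M. t \<le> f \<omega>} = (\<integral>\<^sup>+\<omega>. indicator {\<omega> \<in> space M. t \<le> f \<omega>} \<omega> \<partial>M)"
    by simp
  also have "\<dots> \<le> (\<integral>\<^sup>+\<omega>. ennreal (f \<omega>) / ennreal t \<partial>M)"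
  proof (intro nn_integral_mono)
    fix \<omega>
    have "t \<le> f \<omega> \<Longrightarrow> 1 \<le> ennreal (f \<omega>) / ennreal t"
      using t by (simp add: divide_ennreal ennreal_1[symmetric] ennreal_le_iff del: ennreal_1)
    then show "indicator {\<omega> \<in> space M. t \<le> f \<omega>} \<omega> \<le> ennreal (f \<omega>) / ennreal t"
      by (auto simp: indicator_def)
  qed
  also have "\<dots> = (\<integral>\<^sup>+\<omega>. ennreal (f \<omega>) \<partial>M) / ennreal t" using f by (simp add: nn_integral_divide)
  also have "\<dots> \<le> ennreal r / ennreal t" using E by (rule divide_right_mono_ennreal)
  also have "\<dots> = ennreal (r / t)" using r t by (simp add: divide_ennreal)
  finally show ?thesis using r t by (simp add: emeasure_eq_measure ennreal_le_iff)
qed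

lemma (in prob_space) prob_scaled_ge_le:
  fixes f :: "'a \<Rightarrow> real"
  assumes f: "f \<in> borel_measurable M" and c: "c \<ge> 0" and t: "t > 0" and r: "r \<ge> 0"
    and E: "(\<integral>\<^sup>+\<omega>. ennreal (f \<omega>) \<partial>M) \<le> ennreal r"
  shows "prob {\<omega> \<in> space M. t \<le> c * f \<omega>} \<le> c * r / t"
proof (rule prob_ge_le_Markov)
  have "(\<integral>\<^sup>+\<omega>. ennreal (c * f \<omega>) \<partial>M) = ennreal c * (\<integral>\<^sup>+\<omega>. ennreal (f \<omega>) \<partial>M)"
    using c f by (rule nn_integral_ennreal_cmult)
  also have "\<dots> \<le> ennreal c * ennreal r" using E by (rule mult_left_mono) simp
  also have "\<dots> = ennreal (c * r)" using c by (rule ennreal_mult'[symmetric])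
  finally show "(\<integral>\<^sup>+\<omega>. ennreal (c * f \<omega>) \<partial>M) \<le> ennreal (c * r)" .
qed (use f c t r in auto)

section \<open>Sub-Gaussian covariates\<close>

lemma power_le_exp:
  fixes v :: real
  assumes "v \<ge> 0" "q > 0"
  shows "v^q \<le> real q ^ q * exp v"
proof -
  have "(v / real q)^q \<le> (1 + v / real q)^q" using assms by (intro power_mono) auto
  also have "\<dots> \<le> exp v" using assms by (intro exp_ge_one_plus_x_over_n_power_n) auto
  finally show ?thesis using assms by (simp add: power_divide field_simps)
qed

lemma power_le_split_exp:
  fixes u L :: real
  assumes "u \<ge> 0" "L \<ge> 0" "q > 0"
  shows "u^q \<le> (2 * L)^q + (2 * real q)^q * exp (u - L)"
proof (cases "u \<le> 2 * L")
  case True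
  then have "u^q \<le> (2 * L)^q" using assms by (intro power_mono) auto
  then show ?thesis by (simp add: add_increasing2)
next
  case False
  have "(u/2)^q \<le> real q ^ q * exp (u/2)" using power_le_exp[of "u/2" q] assms by auto
  also have "\<dots> \<le> real q ^ q * exp (u - L)" using False by (intro mult_left_mono) auto
  finally have "u^q \<le> 2^q * (real q ^ q * exp (u - L))" by (simp add: power_divide field_simps)
  moreover have "0 \<le> (2 * L)^q" using assms by simp
  ultimately show ?thesis by (simp add: power_mult_distrib mult.assoc)
qed

lemma (in prob_space) nn_integral_abs_power_le_of_exp_square:
  fixes Z :: "'a \<Rightarrow> real"
  assumes Z: "Z \<in> borel_measurable M" and T: "T > 0" and q: "q > 0"
    and E: "(\<integral>\<^sup>+\<omega>. ennreal (exp ((Z \<omega> / T)\<^sup>2)) \<partial>M) \<le> 2"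
  shows "(\<integral>\<^sup>+\<omega>. ennreal (\<bar>Z \<omega>\<bar>^(2 * q)) \<partial>M) \<le> ennreal (2 * real q^q * T^(2 * q))"
proof -
  have "\<bar>Z \<omega>\<bar>^(2 * q) \<le> T^(2 * q) * real q^q * exp ((Z \<omega> / T)\<^sup>2)" for \<omega>
  proof -
    have "\<bar>Z \<omega>\<bar>^(2 * q) = T^(2 * q) * ((Z \<omega> / T)\<^sup>2)^q"
      using T by (simp add: power_mult power_divide power2_abs)
    also have "\<dots> \<le> T^(2 * q) * (real q^q * exp ((Z \<omega> / T)\<^sup>2))"
      using power_le_exp[of "(Z \<omega> / T)\<^sup>2" q] q T by (intro mult_left_mono) auto
    finally show ?thesis by (simp add: mult.assoc)
  qed
  then have "(\<integral>\<^sup>+\<omega>. ennreal (\<bar>Z \<omega>\<bar>^(2 * q)) \<partial>M)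
      \<le> (\<integral>\<^sup>+\<omega>. ennreal (T^(2 * q) * real q^q) * ennreal (exp ((Z \<omega> / T)\<^sup>2)) \<partial>M)"
    using T by (intro nn_integral_mono) (simp add: ennreal_mult'[symmetric] ennreal_leI)
  also have "\<dots> = ennreal (T^(2 * q) * real q^q) * (\<integral>\<^sup>+\<omega>. ennreal (exp ((Z \<omega> / T)\<^sup>2)) \<partial>M)"
  proof (intro nn_integral_cmult)
    show "(\<lambda>\<omega>. ennreal (exp ((Z \<omega> / T)\<^sup>2))) \<in> borel_measurable M" using Z by measurable
  qed
  also have "\<dots> \<le> ennreal (T^(2 * q) * real q^q) * 2" using E by (intro mult_left_mono) auto
  also have "\<dots> = ennreal (2 * real q^q * T^(2 * q))"
    using T by (simp add: ennreal_mult mult.commute mult.left_commute)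
  finally show ?thesis .
qed

text \<open>A union bound in disguise: \<open>exp\<close> of the squared maximum is at most \<open>1\<close> plus the sum
  of the \<open>exp\<close>'s of the squares; splitting the power at \<open>L = ln (2(p + 1))\<close> turns the resulting
  factor \<open>p\<close> into a logarithmic term.\<close>

lemma sup_norm_p_power_le_exp_sum:
  fixes z :: "nat \<Rightarrow> real" and p q :: nat
  assumes T: "T > 0" and q: "q > 0"
  defines "L \<equiv> ln (2 * (real p + 1))" and "B \<equiv> (2 * real q)^q / (2 * (real p + 1))"
  shows "(sup_norm_p p z)^(2 * q)
    \<le> T^(2 * q) * ((2 * L)^q + B) + (\<Sum>j<p. T^(2 * q) * B * exp ((z j / T)\<^sup>2))"
proof -
  define u where "u = (sup_norm_p p z / T)\<^sup>2"
  have B: "B \<ge> 0" unfolding B_def by simp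
  have exp_u: "exp u \<le> 1 + (\<Sum>j<p. exp ((z j / T)\<^sup>2))"
    using sup_norm_p_cases[of p z]
  proof
    assume "sup_norm_p p z = 0"
    then show ?thesis unfolding u_def by (simp add: sum_nonneg)
  next
    assume "\<exists>j<p. sup_norm_p p z = \<bar>z j\<bar>"
    then obtain j where j: "j < p" "sup_norm_p p z = \<bar>z j\<bar>" by auto
    have "exp u = exp ((z j / T)\<^sup>2)" unfolding u_def j by (simp add: power2_abs abs_divide power_divide)
    also have "\<dots> \<le> (\<Sum>j<p. exp ((z j / T)\<^sup>2))" using j by (intro member_le_sum) auto
    finally show ?thesis by simp
  qed
  have "u^q \<le> (2 * L)^q + (2 * real q)^q * exp (u - L)"
    by (rule power_le_split_exp) (use q in \<open>auto simp: u_def L_def\<close>)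
  also have "(2 * real q)^q * exp (u - L) = B * exp u" unfolding B_def L_def by (simp add: exp_diff)
  also have "B * exp u \<le> B * (1 + (\<Sum>j<p. exp ((z j / T)\<^sup>2)))" using exp_u B by (rule mult_left_mono)
  finally have "T^(2 * q) * u^q \<le> T^(2 * q) * ((2 * L)^q + B * (1 + (\<Sum>j<p. exp ((z j / T)\<^sup>2))))"
    using T by (intro mult_left_mono) auto
  moreover have "T^(2 * q) * u^q = (sup_norm_p p z)^(2 * q)"
    unfolding u_def using T by (simp add: power_mult power_divide)
  ultimately show ?thesis by (simp add: algebra_simps sum_distrib_left)
qed

lemma (in prob_space) nn_integral_sup_norm_p_power_le:
  fixes Z :: "nat \<Rightarrow> 'a \<Rightarrow> real"
  assumes Z: "\<forall>j<p. Z j \<in> borel_measurable M" and T: "T > 0" and q: "q > 0"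
    and E: "\<forall>j<p. (\<integral>\<^sup>+\<omega>. ennreal (exp ((Z j \<omega> / T)\<^sup>2)) \<partial>M) \<le> 2"
  shows "(\<integral>\<^sup>+\<omega>. ennreal ((sup_norm_p p (\<lambda>j. Z j \<omega>))^(2 * q)) \<partial>M)
     \<le> ennreal (T^(2 * q) * ((2 * ln (2 * (real p + 1)))^q + (2 * real q)^q))"
proof -
  define L where "L = ln (2 * (real p + 1))"
  define B where "B = (2 * real q)^q / (2 * (real p + 1))"
  have L: "L \<ge> 0" and B: "B \<ge> 0" unfolding L_def B_def by simp_all
  have "(\<integral>\<^sup>+\<omega>. ennreal ((sup_norm_p p (\<lambda>j. Z j \<omega>))^(2 * q)) \<partial>M)
      \<le> ennreal (T^(2 * q) * ((2 * L)^q + B) + (\<Sum>j\<in>{..<p}. T^(2 * q) * B * 2))"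
  proof (rule nn_integral_le_linear_combination)
    show "\<forall>x\<in>space M. (sup_norm_p p (\<lambda>j. Z j x))^(2 * q)
        \<le> T^(2 * q) * ((2 * L)^q + B) + (\<Sum>j\<in>{..<p}. T^(2 * q) * B * exp ((Z j x / T)\<^sup>2))"
      unfolding L_def B_def using sup_norm_p_power_le_exp_sum[OF T q, where z = "\<lambda>j. Z j _" and p = p] by blast
    show "\<forall>j\<in>{..<p}. (\<integral>\<^sup>+x. ennreal (exp ((Z j x / T)\<^sup>2)) \<partial>M) \<le> ennreal 2"
      using E by simp
    show "\<forall>j\<in>{..<p}. (\<lambda>x. exp ((Z j x / T)\<^sup>2)) \<in> borel_measurable M"
      using Z by (auto intro: borel_measurable_exp borel_measurable_power borel_measurable_divide)
  qed (use T L B in auto)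
  also have "\<dots> \<le> ennreal (T^(2 * q) * ((2 * L)^q + (2 * real q)^q))"
  proof (intro ennreal_leI)
    have "B * (1 + 2 * real p) \<le> (2 * real q)^q" unfolding B_def by (simp add: field_simps)
    then have "T^(2 * q) * (B * (1 + 2 * real p)) \<le> T^(2 * q) * (2 * real q)^q"
      using T by (intro mult_left_mono) auto
    then show "T^(2 * q) * ((2 * L)^q + B) + (\<Sum>j\<in>{..<p}. T^(2 * q) * B * 2)
        \<le> T^(2 * q) * ((2 * L)^q + (2 * real q)^q)"
      by (simp add: algebra_simps)
  qed
  finally show ?thesis unfolding L_def .
qed

lemma borel_measurable_coordinate:
  fixes X :: "'a \<Rightarrow> nat \<Rightarrow> real"
  assumes X: "X \<in> measurable M (PiM {..<p} (\<lambda>_. borel))"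
  shows "(\<lambda>\<omega>. X \<omega> j) \<in> borel_measurable M"
proof (cases "j < p")
  case True
  then show ?thesis using X by (intro measurable_compose[OF X measurable_component_singleton]) auto
next
  case False
  have "X \<omega> j = undefined" if "\<omega> \<in> space M" for \<omega>
    using measurable_space[OF X that] False by (auto simp: space_PiM PiE_def extensional_def)
  then show ?thesis by (subst measurable_cong[where g = "\<lambda>_. undefined"]) auto
qed

lemma inner_p_matvec_symmetric:
  assumes "\<forall>i<p. \<forall>j<p. A i j = A j i"
  shows "inner_p p (matvec p A u) v = inner_p p u (matvec p A v)"
proof -
  have "inner_p p (matvec p A u) v = (\<Sum>i<p. \<Sum>j<p. A i j * u j * v i)"
    unfolding inner_p_def matvec_def by (simp add: sum_distrib_right)
  also have "\<dots> = (\<Sum>j<p. \<Sum>i<p. A i j * u j * v i)" by (rule sum.swap)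
  also have "\<dots> = (\<Sum>j<p. \<Sum>i<p. u j * (A j i * v i))"
    using assms by (intro sum.cong refl) (simp add: mult_ac)
  finally show ?thesis unfolding inner_p_def matvec_def by (simp add: sum_distrib_left)
qed

lemma sum_nested_product_swap:
  fixes A :: "nat \<Rightarrow> real" and B C :: "nat \<Rightarrow> nat \<Rightarrow> real"
  shows "(\<Sum>a<p. A a * (\<Sum>b<p. B a b * (\<Sum>c<p. C b c * v c)))
    = (\<Sum>c<p. (\<Sum>a<p. \<Sum>b<p. A a * B a b * C b c) * v c)"
proof -
  have "(\<Sum>a<p. A a * (\<Sum>b<p. B a b * (\<Sum>c<p. C b c * v c)))
      = (\<Sum>a<p. \<Sum>b<p. \<Sum>c<p. A a * B a b * C b c * v c)"
    by (simp add: sum_distrib_left mult.assoc)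
  also have "\<dots> = (\<Sum>c<p. \<Sum>a<p. \<Sum>b<p. A a * B a b * C b c * v c)"
    by (subst sum.swap) (rule sum.cong[OF refl], rule sum.swap)
  finally show ?thesis by (simp add: sum_distrib_right)
qed

lemma inv_sqrt_matvec_cancel:
  assumes inv: "is_inv_sqrt p R S" and j: "j < p"
  shows "matvec p S (matvec p R (matvec p R x)) j = x j"
proof -
  define z where "z = (\<lambda>i. matvec p S (matvec p R (matvec p R x)) i - x i)"
  have RSR: "\<forall>i<p. \<forall>c<p. (\<Sum>a<p. \<Sum>b<p. R i a * S a b * R b c) = (if i = c then 1 else 0)"
    using inv unfolding is_inv_sqrt_def by auto
  have "matvec p R z i = 0" if i: "i < p" for i
  proof -
    have "(\<Sum>a<p. R i a * (\<Sum>b<p. S a b * (\<Sum>c<p. R b c * matvec p R x c)))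
        = (\<Sum>c<p. (\<Sum>a<p. \<Sum>b<p. R i a * S a b * R b c) * matvec p R x c)"
      by (rule sum_nested_product_swap)
    also have "\<dots> = (\<Sum>c<p. if i = c then matvec p R x c else 0)"
      using RSR i by (intro sum.cong refl) auto
    also have "\<dots> = matvec p R x i" using i by simp
    finally show ?thesis unfolding z_def matvec_def by (simp add: right_diff_distrib sum_subtractf)
  qed
  then have "inner_p p z (matvec p R z) = 0" unfolding inner_p_def by simp
  then have "\<not> (\<exists>j<p. z j \<noteq> 0)" using inv unfolding is_inv_sqrt_def by (metis less_irrefl)
  then show ?thesis unfolding z_def using j by auto
qed

text \<open>Whitening: \<open>\<langle>x, b\<rangle> = \<langle>R S b, R x\<rangle>\<close> with \<open>\<parallel>R S b\<parallel>\<^sup>2 = \<langle>b, S b\<rangle> \<le> C \<parallel>b\<parallel>\<^sup>2\<close>, so linear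
  functionals of \<open>x\<close> are linear functionals of the isotropic vector \<open>R x\<close> of comparable norm.\<close>

lemma inner_p_whitened:
  assumes inv: "is_inv_sqrt p R S" and S: "\<forall>i<p. \<forall>j<p. S i j = S j i"
  shows "inner_p p x b = inner_p p (matvec p R (matvec p S b)) (matvec p R x)"
proof -
  have R: "\<forall>i<p. \<forall>j<p. R i j = R j i" using inv unfolding is_inv_sqrt_def by auto
  have "inner_p p (matvec p R (matvec p S b)) (matvec p R x)
      = inner_p p b (matvec p S (matvec p R (matvec p R x)))"
    by (simp add: inner_p_matvec_symmetric[OF R] inner_p_matvec_symmetric[OF S])
  also have "\<dots> = inner_p p x b"
    unfolding inner_p_def using inv_sqrt_matvec_cancel[OF inv] by (simp add: mult.commute)
  finally show ?thesis ..
qed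

lemma norm2_p_sq: "(norm2_p p u)\<^sup>2 = (\<Sum>j<p. (u j)\<^sup>2)"
  unfolding norm2_p_def by (simp add: sum_nonneg)

lemma norm2_p_nonneg: "norm2_p p v \<ge> 0"
  unfolding norm2_p_def by (simp add: sum_nonneg)

lemma norm2_p_whitened_sq_le:
  assumes inv: "is_inv_sqrt p R S" and S: "\<forall>i<p. \<forall>j<p. S i j = S j i"
    and op: "\<forall>u. norm2_p p (matvec p S u) \<le> C * norm2_p p u"
  shows "(norm2_p p (matvec p R (matvec p S b)))\<^sup>2 \<le> C * (norm2_p p b)\<^sup>2"
proof -
  define Sb where "Sb = matvec p S b"
  have "(norm2_p p (matvec p R Sb))\<^sup>2 = inner_p p (matvec p R Sb) (matvec p R Sb)"
    unfolding norm2_p_sq inner_p_def by (simp add: power2_eq_square)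
  also have "\<dots> = inner_p p b Sb"
    using inner_p_whitened[OF inv S, of Sb b] unfolding Sb_def inner_p_def by (simp add: mult.commute)
  also have "\<dots> \<le> (\<Sum>j<p. \<bar>b j\<bar> * \<bar>Sb j\<bar>)" unfolding inner_p_def
    by (rule order_trans[OF sum_abs[THEN order_trans[OF abs_ge_self]]]) (simp add: abs_mult)
  also have "\<dots> \<le> norm2_p p b * norm2_p p Sb"
    using L2_set_mult_ineq[of b Sb "{..<p}"] unfolding norm2_p_def L2_set_def by simp
  also have "\<dots> \<le> norm2_p p b * (C * norm2_p p b)"
    unfolding Sb_def using op norm2_p_nonneg by (intro mult_left_mono) auto
  finally show ?thesis unfolding Sb_def by (simp add: power2_eq_square mult_ac)
qed

lemma (in prob_space) nn_integral_exp_square_le_of_psi2_norm: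
  fixes Z :: "'a \<Rightarrow> real"
  assumes "subgaussian M Z" and "psi2_norm M Z \<le> C"
  shows "(\<integral>\<^sup>+\<omega>. ennreal (exp ((Z \<omega> / (\<bar>C\<bar> + 1))\<^sup>2)) \<partial>M) \<le> 2"
proof -
  have ne: "{t. psi2_admissible M Z t} \<noteq> {}" using assms(1) unfolding subgaussian_def by auto
  have "Inf {t. psi2_admissible M Z t} < \<bar>C\<bar> + 1" using assms(2) unfolding psi2_norm_def by linarith
  from cInf_lessD[OF ne this] obtain t where "psi2_admissible M Z t" "t < \<bar>C\<bar> + 1" by auto
  then have t: "t > 0" "t < \<bar>C\<bar> + 1" and int: "integrable M (\<lambda>\<omega>. exp ((Z \<omega> / t)\<^sup>2))"
    and le2: "(\<integral>\<omega>. exp ((Z \<omega> / t)\<^sup>2) \<partial>M) \<le> 2" unfolding psi2_admissible_def by auto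
  have "(\<integral>\<^sup>+\<omega>. ennreal (exp ((Z \<omega> / (\<bar>C\<bar> + 1))\<^sup>2)) \<partial>M) \<le> (\<integral>\<^sup>+\<omega>. ennreal (exp ((Z \<omega> / t)\<^sup>2)) \<partial>M)"
  proof (intro nn_integral_mono ennreal_leI)
    fix \<omega>
    have "\<bar>Z \<omega>\<bar> / (\<bar>C\<bar> + 1) \<le> \<bar>Z \<omega>\<bar> / t" using t by (intro divide_left_mono) auto
    then have "(\<bar>Z \<omega>\<bar> / (\<bar>C\<bar> + 1))\<^sup>2 \<le> (\<bar>Z \<omega>\<bar> / t)\<^sup>2" by (intro power_mono) auto
    then show "exp ((Z \<omega> / (\<bar>C\<bar> + 1))\<^sup>2) \<le> exp ((Z \<omega> / t)\<^sup>2)" by (simp add: power_divide power2_abs)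
  qed
  also have "\<dots> = ennreal (\<integral>\<omega>. exp ((Z \<omega> / t)\<^sup>2) \<partial>M)"
    using int by (intro nn_integral_eq_integral) auto
  also have "\<dots> \<le> 2" using le2 by (simp add: ennreal_leI del: ennreal_numeral flip: ennreal_numeral)
  finally show ?thesis .
qed

lemma (in prob_space) nn_integral_exp_square_inner_le:
  fixes Xi :: "'a \<Rightarrow> nat \<Rightarrow> real"
  assumes SG: "\<forall>u. norm2_p p u = 1 \<longrightarrow> subgaussian M (\<lambda>\<omega>. inner_p p u (Xi \<omega>))
                 \<and> psi2_norm M (\<lambda>\<omega>. inner_p p u (Xi \<omega>)) \<le> Cg"
    and v: "norm2_p p v \<le> t" and t: "t > 0"
  shows "(\<integral>\<^sup>+\<omega>. ennreal (exp ((inner_p p v (Xi \<omega>) / (t * (\<bar>Cg\<bar> + 1)))\<^sup>2)) \<partial>M) \<le> 2"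
proof (cases "norm2_p p v = 0")
  case True
  then have "\<forall>j<p. v j = 0" unfolding norm2_p_def by (simp add: sum_nonneg_eq_0_iff)
  then show ?thesis by (simp add: inner_p_def emeasure_space_1)
next
  case False
  define r where "r = norm2_p p v"
  have r: "r > 0" using False norm2_p_nonneg[of p v] unfolding r_def by linarith
  define u where "u = (\<lambda>j. v j / r)"
  have "(\<Sum>j<p. (u j)\<^sup>2) = (\<Sum>j<p. (v j)\<^sup>2) / r\<^sup>2" unfolding u_def by (simp add: power_divide sum_divide_distrib)
  also have "\<dots> = 1" using r unfolding r_def norm2_p_sq[symmetric] by simp
  finally have u: "norm2_p p u = 1" unfolding norm2_p_def by simp
  have v_eq: "inner_p p v z = r * inner_p p u z" for z
    unfolding inner_p_def u_def using r by (simp add: sum_distrib_left)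
  have "(\<integral>\<^sup>+\<omega>. ennreal (exp ((inner_p p v (Xi \<omega>) / (t * (\<bar>Cg\<bar> + 1)))\<^sup>2)) \<partial>M)
     \<le> (\<integral>\<^sup>+\<omega>. ennreal (exp ((inner_p p u (Xi \<omega>) / (\<bar>Cg\<bar> + 1))\<^sup>2)) \<partial>M)"
  proof (intro nn_integral_mono ennreal_leI)
    fix \<omega>
    define Z where "Z = inner_p p u (Xi \<omega>)"
    have "r * \<bar>Z\<bar> \<le> t * \<bar>Z\<bar>" using v r_def by (intro mult_right_mono) auto
    then have "r * \<bar>Z\<bar> / (t * (\<bar>Cg\<bar> + 1)) \<le> t * \<bar>Z\<bar> / (t * (\<bar>Cg\<bar> + 1))"
      by (rule divide_right_mono) (use t in simp)
    also have "\<dots> = \<bar>Z\<bar> / (\<bar>Cg\<bar> + 1)" using t by simp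
    finally have "r * \<bar>Z\<bar> / (t * (\<bar>Cg\<bar> + 1)) \<le> \<bar>Z\<bar> / (\<bar>Cg\<bar> + 1)" .
    then have "(r * \<bar>Z\<bar> / (t * (\<bar>Cg\<bar> + 1)))\<^sup>2 \<le> (\<bar>Z\<bar> / (\<bar>Cg\<bar> + 1))\<^sup>2"
      using t r by (intro power_mono) auto
    then show "exp ((inner_p p v (Xi \<omega>) / (t * (\<bar>Cg\<bar> + 1)))\<^sup>2) \<le> exp ((Z / (\<bar>Cg\<bar> + 1))\<^sup>2)"
      unfolding v_eq Z_def[symmetric] using r by (simp add: power_divide power_mult_distrib power2_abs)
  qed
  also have "\<dots> \<le> 2" using SG u by (intro nn_integral_exp_square_le_of_psi2_norm) auto
  finally show ?thesis .
qed

lemma (in prob_space) nn_integral_exp_square_inner_whitened_le: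
  fixes Xi :: "'a \<Rightarrow> nat \<Rightarrow> real"
  assumes inv: "is_inv_sqrt p R S" and S: "\<forall>i<p. \<forall>j<p. S i j = S j i"
    and op: "\<forall>u. norm2_p p (matvec p S u) \<le> C * norm2_p p u"
    and SG: "\<forall>u. norm2_p p u = 1 \<longrightarrow> subgaussian M (\<lambda>\<omega>. inner_p p u (matvec p R (Xi \<omega>)))
                 \<and> psi2_norm M (\<lambda>\<omega>. inner_p p u (matvec p R (Xi \<omega>))) \<le> Cg"
    and b: "norm2_p p b \<le> t" and t: "t > 0"
  shows "(\<integral>\<^sup>+\<omega>. ennreal (exp ((inner_p p (Xi \<omega>) b / (sqrt (max C 1) * t * (\<bar>Cg\<bar> + 1)))\<^sup>2)) \<partial>M) \<le> 2"
proof -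
  define v where "v = matvec p R (matvec p S b)"
  have "(norm2_p p v)\<^sup>2 \<le> C * (norm2_p p b)\<^sup>2"
    unfolding v_def by (rule norm2_p_whitened_sq_le[OF inv S op])
  also have "\<dots> \<le> max C 1 * t\<^sup>2"
    using b norm2_p_nonneg[of p b] by (intro mult_mono power_mono) auto
  also have "\<dots> = (sqrt (max C 1) * t)\<^sup>2" by (simp add: power_mult_distrib)
  finally have "norm2_p p v \<le> sqrt (max C 1) * t"
    by (rule power2_le_imp_le) (use t in simp)
  then have "(\<integral>\<^sup>+\<omega>. ennreal (exp ((inner_p p v (matvec p R (Xi \<omega>))
      / (sqrt (max C 1) * t * (\<bar>Cg\<bar> + 1)))\<^sup>2)) \<partial>M) \<le> 2"
    using t by (intro nn_integral_exp_square_inner_le[OF SG]) auto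
  moreover have "inner_p p (Xi \<omega>) b = inner_p p v (matvec p R (Xi \<omega>))" for \<omega>
    unfolding v_def by (rule inner_p_whitened[OF inv S])
  ultimately show ?thesis by simp
qed

section \<open>Moments of the mixture response\<close>

lemma borel_measurable_inner_p_fst[measurable]:
  "(\<lambda>z. inner_p p (fst z) b) \<in> borel_measurable (PiM {..<p} (\<lambda>_. borel) \<Otimes>\<^sub>M N)"
  unfolding inner_p_def by measurable

lemma borel_measurable_moe_density_pair:
  "(\<lambda>z. moe_density K p al be sg (fst z) (snd z)) \<in> borel_measurable (PiM {..<p} (\<lambda>_. borel) \<Otimes>\<^sub>M lborel)"
  unfolding moe_density_def gate_def comp_dens_def by measurable

lemma gate_nonneg: "0 \<le> gate K p al x l"
  unfolding gate_def by (simp add: sum_nonneg)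

lemma gate_le_1:
  assumes "l < K"
  shows "gate K p al x l \<le> 1"
proof -
  have "exp (inner_p p x (al l)) \<le> (\<Sum>l<K. exp (inner_p p x (al l)))"
    using assms by (intro member_le_sum) auto
  moreover have "(\<Sum>l<K. exp (inner_p p x (al l))) > 0" using assms by (intro sum_pos) auto
  ultimately show ?thesis unfolding gate_def by simp
qed

lemma sum_gate:
  assumes "K > 0"
  shows "(\<Sum>l<K. gate K p al x l) = 1"
proof -
  have "(\<Sum>l<K. exp (inner_p p x (al l))) > 0" using assms by (intro sum_pos) auto
  then show ?thesis unfolding gate_def by (simp add: sum_divide_distrib[symmetric])
qed

lemma comp_dens_eq_normal_density:
  assumes "sg l > 0"
  shows "comp_dens p be sg x y l = normal_density (inner_p p x (be l)) (sg l) y"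
proof -
  have "sqrt (2 * pi * (sg l)\<^sup>2) = sqrt (2 * pi) * sg l" using assms by (simp add: real_sqrt_mult)
  then show ?thesis unfolding comp_dens_def normal_density_def by simp
qed

lemma nn_integral_normal_density: "\<sigma> > 0 \<Longrightarrow> (\<integral>\<^sup>+y. ennreal (normal_density \<mu> \<sigma> y) \<partial>lborel) = 1"
  by (subst nn_integral_eq_integral) (auto intro: integrable_normal_density simp: integral_normal_density)

lemma nn_integral_normal_power6:
  assumes "\<sigma> > 0"
  shows "(\<integral>\<^sup>+y. ennreal (normal_density \<mu> \<sigma> y * (y - \<mu>)^6) \<partial>lborel) = ennreal (15 * \<sigma>^6)"
proof -
  have "(\<integral>\<^sup>+y. ennreal (normal_density \<mu> \<sigma> y * (y - \<mu>)^(2 * 3)) \<partial>lborel)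
      = ennreal (\<integral>y. normal_density \<mu> \<sigma> y * (y - \<mu>)^(2 * 3) \<partial>lborel)"
    using assms by (subst nn_integral_eq_integral) (auto intro!: integrable_normal_moment)
  also have "(\<integral>y. normal_density \<mu> \<sigma> y * (y - \<mu>)^(2 * 3) \<partial>lborel) = 15 * \<sigma>^6"
    using assms by (subst integral_normal_moment_even) (simp_all add: fact_numeral field_simps power2_eq_square)
  finally show ?thesis by simp
qed

lemma abs_add_power6_le:
  fixes a b :: real
  shows "\<bar>a + b\<bar>^6 \<le> 64 * (\<bar>a\<bar>^6 + \<bar>b\<bar>^6)"
proof -
  have "\<bar>a + b\<bar> \<le> 2 * max \<bar>a\<bar> \<bar>b\<bar>" by (simp add: abs_triangle_ineq[THEN order_trans] max_def)
  then have "\<bar>a + b\<bar>^6 \<le> (2 * max \<bar>a\<bar> \<bar>b\<bar>)^6" by (intro power_mono) auto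
  also have "\<dots> = 64 * (max \<bar>a\<bar> \<bar>b\<bar>)^6" by (simp add: power_mult_distrib)
  also have "\<dots> \<le> 64 * (\<bar>a\<bar>^6 + \<bar>b\<bar>^6)" by (simp add: max_def)
  finally show ?thesis .
qed

lemma nn_integral_normal_shifted_power6_le:
  assumes \<sigma>: "\<sigma> > 0"
  shows "(\<integral>\<^sup>+y. ennreal (normal_density \<mu> \<sigma> y * \<bar>y - \<nu>\<bar>^6) \<partial>lborel) \<le> ennreal (64 * (15 * \<sigma>^6 + \<bar>\<mu> - \<nu>\<bar>^6))"
proof -
  have "(\<integral>\<^sup>+y. ennreal (normal_density \<mu> \<sigma> y * \<bar>y - \<nu>\<bar>^6) \<partial>lborel)
      \<le> (\<integral>\<^sup>+y. ennreal (64 * (normal_density \<mu> \<sigma> y * (y - \<mu>)^6))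
          + ennreal ((64 * \<bar>\<mu> - \<nu>\<bar>^6) * normal_density \<mu> \<sigma> y) \<partial>lborel)"
  proof (intro nn_integral_mono)
    fix y
    have "normal_density \<mu> \<sigma> y * \<bar>y - \<nu>\<bar>^6
        \<le> normal_density \<mu> \<sigma> y * (64 * (\<bar>y - \<mu>\<bar>^6 + \<bar>\<mu> - \<nu>\<bar>^6))"
      using abs_add_power6_le[of "y - \<mu>" "\<mu> - \<nu>"] by (intro mult_left_mono) auto
    also have "\<dots> = 64 * (normal_density \<mu> \<sigma> y * (y - \<mu>)^6) + (64 * \<bar>\<mu> - \<nu>\<bar>^6) * normal_density \<mu> \<sigma> y"
      by (simp add: algebra_simps)
    finally have "ennreal (normal_density \<mu> \<sigma> y * \<bar>y - \<nu>\<bar>^6)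
        \<le> ennreal (64 * (normal_density \<mu> \<sigma> y * (y - \<mu>)^6) + (64 * \<bar>\<mu> - \<nu>\<bar>^6) * normal_density \<mu> \<sigma> y)"
      by (rule ennreal_leI)
    then show "ennreal (normal_density \<mu> \<sigma> y * \<bar>y - \<nu>\<bar>^6)
        \<le> ennreal (64 * (normal_density \<mu> \<sigma> y * (y - \<mu>)^6))
          + ennreal ((64 * \<bar>\<mu> - \<nu>\<bar>^6) * normal_density \<mu> \<sigma> y)"
      by (subst (asm) ennreal_plus) auto
  qed
  also have "\<dots> = ennreal 64 * (\<integral>\<^sup>+y. ennreal (normal_density \<mu> \<sigma> y * (y - \<mu>)^6) \<partial>lborel)
      + ennreal (64 * \<bar>\<mu> - \<nu>\<bar>^6) * (\<integral>\<^sup>+y. ennreal (normal_density \<mu> \<sigma> y) \<partial>lborel)"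
    by (subst nn_integral_add) (auto simp: nn_integral_ennreal_cmult)
  also have "\<dots> = ennreal 64 * ennreal (15 * \<sigma>^6) + ennreal (64 * \<bar>\<mu> - \<nu>\<bar>^6) * 1"
    using \<sigma> by (simp only: nn_integral_normal_power6 nn_integral_normal_density)
  also have "\<dots> = ennreal (64 * (15 * \<sigma>^6) + 64 * \<bar>\<mu> - \<nu>\<bar>^6)"
  proof -
    have "0 \<le> 64 * (15 * \<sigma>^6)" "0 \<le> 64 * \<bar>\<mu> - \<nu>\<bar>^6" using \<sigma> by simp_all
    then show ?thesis by (simp only: mult_1_right ennreal_mult'[symmetric, OF zero_le_numeral] ennreal_plus)
  qed
  also have "\<dots> = ennreal (64 * (15 * \<sigma>^6 + \<bar>\<mu> - \<nu>\<bar>^6))" by (simp add: algebra_simps)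
  finally show ?thesis .
qed

lemma nn_integral_moe_residual_power6_le:
  assumes sg: "\<forall>l<K. sg l > 0"
  shows "(\<integral>\<^sup>+y. ennreal (moe_density K p al be sg x y * \<bar>y - inner_p p x (be k)\<bar>^6) \<partial>lborel)
     \<le> ennreal (64 * (\<Sum>l<K. 15 * (sg l)^6 + \<bar>inner_p p x (be l) - inner_p p x (be k)\<bar>^6))"
proof -
  define \<mu> where "\<mu> l = inner_p p x (be l)" for l
  have "(\<integral>\<^sup>+y. ennreal (moe_density K p al be sg x y * \<bar>y - \<mu> k\<bar>^6) \<partial>lborel)
      = (\<integral>\<^sup>+y. ennreal (\<Sum>l<K. gate K p al x l * (normal_density (\<mu> l) (sg l) y * \<bar>y - \<mu> k\<bar>^6)) \<partial>lborel)"
    unfolding moe_density_def \<mu>_def using sg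
    by (intro nn_integral_cong) (simp add: sum_distrib_right comp_dens_eq_normal_density mult.assoc)
  also have "\<dots> = (\<Sum>l<K. ennreal (gate K p al x l)
      * (\<integral>\<^sup>+y. ennreal (normal_density (\<mu> l) (sg l) y * \<bar>y - \<mu> k\<bar>^6) \<partial>lborel))"
    by (intro nn_integral_sum_cmult) (auto simp: gate_nonneg)
  also have "\<dots> \<le> (\<Sum>l<K. ennreal (gate K p al x l) * ennreal (64 * (15 * (sg l)^6 + \<bar>\<mu> l - \<mu> k\<bar>^6)))"
    using sg by (intro sum_mono mult_left_mono nn_integral_normal_shifted_power6_le) auto
  also have "\<dots> \<le> (\<Sum>l<K. ennreal (64 * (15 * (sg l)^6 + \<bar>\<mu> l - \<mu> k\<bar>^6)))"
    by (intro sum_mono, subst ennreal_mult'[symmetric])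
      (auto intro!: ennreal_leI mult_left_le_one_le gate_le_1 gate_nonneg simp del: ennreal_plus)
  also have "\<dots> = ennreal (64 * (\<Sum>l<K. 15 * (sg l)^6 + \<bar>\<mu> l - \<mu> k\<bar>^6))"
    by (subst sum_ennreal) (auto simp: sum_distrib_left simp del: ennreal_plus)
  finally show ?thesis unfolding \<mu>_def .
qed

definition moe_kernel :: "nat \<Rightarrow> nat \<Rightarrow> (nat \<Rightarrow> nat \<Rightarrow> real) \<Rightarrow> (nat \<Rightarrow> nat \<Rightarrow> real) \<Rightarrow> (nat \<Rightarrow> real)
    \<Rightarrow> (nat \<Rightarrow> real) \<Rightarrow> ((nat \<Rightarrow> real) \<times> real) measure" where
  "moe_kernel K p al be sg = (\<lambda>x. distr (density lborel (\<lambda>y. ennreal (moe_density K p al be sg x y)))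
                               (PiM {..<p} (\<lambda>_. borel) \<Otimes>\<^sub>M borel) (\<lambda>y. (x, y)))"

lemma borel_measurable_moe_density[measurable]: "(\<lambda>y. moe_density K p al be sg x y) \<in> borel_measurable lborel"
  unfolding moe_density_def gate_def comp_dens_def by measurable

lemma moe_density_nonneg:
  assumes "\<forall>l<K. sg l > 0"
  shows "moe_density K p al be sg x y \<ge> 0"
  unfolding moe_density_def gate_def comp_dens_def using assms
  by (intro sum_nonneg mult_nonneg_nonneg) (auto simp: sum_nonneg)

lemma nn_integral_moe_density:
  assumes K: "K > 0" and sg: "\<forall>l<K. sg l > 0"
  shows "(\<integral>\<^sup>+y. ennreal (moe_density K p al be sg x y) \<partial>lborel) = 1"
proof -
  have "(\<integral>\<^sup>+y. ennreal (moe_density K p al be sg x y) \<partial>lborel)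
      = (\<integral>\<^sup>+y. ennreal (\<Sum>l<K. gate K p al x l * normal_density (inner_p p x (be l)) (sg l) y) \<partial>lborel)"
    unfolding moe_density_def using sg by (intro nn_integral_cong) (simp add: comp_dens_eq_normal_density)
  also have "\<dots> = (\<Sum>l<K. ennreal (gate K p al x l) * (\<integral>\<^sup>+y. ennreal (normal_density (inner_p p x (be l)) (sg l) y) \<partial>lborel))"
    by (rule nn_integral_sum_cmult) (auto simp: gate_nonneg)
  also have "\<dots> = (\<Sum>l<K. ennreal (gate K p al x l))" using sg by (simp add: nn_integral_normal_density)
  also have "\<dots> = 1" using sum_gate[OF K] by (simp add: sum_ennreal gate_nonneg)
  finally show ?thesis .
qed

lemma measurable_Pair_const:
  assumes x: "x \<in> space (PiM {..<p} (\<lambda>_. (borel :: real measure)))"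
  shows "(\<lambda>y. (x, y)) \<in> measurable (density lborel f) (PiM {..<p} (\<lambda>_. borel) \<Otimes>\<^sub>M borel)"
proof -
  have "(\<lambda>y. (x, y)) \<in> measurable borel (PiM {..<p} (\<lambda>_. borel) \<Otimes>\<^sub>M borel)"
    using x by (intro measurable_Pair) auto
  then show ?thesis by (simp cong: measurable_cong_sets)
qed

lemma prob_space_moe_kernel:
  assumes K: "K > 0" and sg: "\<forall>l<K. sg l > 0" and x: "x \<in> space (PiM {..<p} (\<lambda>_. (borel :: real measure)))"
  shows "prob_space (moe_kernel K p al be sg x)"
proof -
  have "prob_space (density lborel (\<lambda>y. ennreal (moe_density K p al be sg x y)))"
  proof (rule prob_spaceI)
    show "emeasure (density lborel (\<lambda>y. ennreal (moe_density K p al be sg x y)))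
        (space (density lborel (\<lambda>y. ennreal (moe_density K p al be sg x y)))) = 1"
      using nn_integral_moe_density[OF K sg] by (simp add: emeasure_density)
  qed
  then show ?thesis unfolding moe_kernel_def using measurable_Pair_const[OF x] by (rule prob_space.prob_space_distr)
qed

lemma nn_integral_moe_kernel:
  assumes x: "x \<in> space (PiM {..<p} (\<lambda>_. (borel :: real measure)))"
    and F: "F \<in> borel_measurable (PiM {..<p} (\<lambda>_. borel) \<Otimes>\<^sub>M borel)"
  shows "(\<integral>\<^sup>+z. F z \<partial>moe_kernel K p al be sg x) = (\<integral>\<^sup>+y. ennreal (moe_density K p al be sg x y) * F (x, y) \<partial>lborel)"
proof -
  have "(\<integral>\<^sup>+z. F z \<partial>moe_kernel K p al be sg x)
      = (\<integral>\<^sup>+y. F (x, y) \<partial>density lborel (\<lambda>y. ennreal (moe_density K p al be sg x y)))"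
    unfolding moe_kernel_def using measurable_Pair_const[OF x] F by (subst nn_integral_distr) auto
  also have "\<dots> = (\<integral>\<^sup>+y. ennreal (moe_density K p al be sg x y) * F (x, y) \<partial>lborel)"
  proof (rule nn_integral_density)
    show "(\<lambda>y. F (x, y)) \<in> borel_measurable lborel"
      using measurable_compose[OF measurable_Pair_const[OF x, of "\<lambda>_. 1"] F] by (simp cong: measurable_cong_sets)
  qed measurable
  finally show ?thesis .
qed

lemma measurable_moe_kernel:
  assumes K: "K > 0" and sg: "\<forall>l<K. sg l > 0"
  shows "moe_kernel K p al be sg
    \<in> measurable (PiM {..<p} (\<lambda>_. borel)) (subprob_algebra (PiM {..<p} (\<lambda>_. borel) \<Otimes>\<^sub>M borel))"
proof (rule measurable_subprob_algebra)
  fix x assume x: "x \<in> space (PiM {..<p} (\<lambda>_. (borel :: real measure)))"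
  show "subprob_space (moe_kernel K p al be sg x)"
    using prob_space_moe_kernel[OF K sg x] by (rule prob_space_imp_subprob_space)
  show "sets (moe_kernel K p al be sg x) = sets (PiM {..<p} (\<lambda>_. borel) \<Otimes>\<^sub>M borel)"
    unfolding moe_kernel_def by simp
next
  fix A :: "((nat \<Rightarrow> real) \<times> real) set"
  assume A: "A \<in> sets (PiM {..<p} (\<lambda>_. (borel :: real measure)) \<Otimes>\<^sub>M borel)"
  have "emeasure (moe_kernel K p al be sg x) A
      = (\<integral>\<^sup>+y. ennreal (moe_density K p al be sg x y) * indicator A (x, y) \<partial>lborel)"
    if x: "x \<in> space (PiM {..<p} (\<lambda>_. (borel :: real measure)))" for x
  proof -
    have "sets (moe_kernel K p al be sg x) = sets (PiM {..<p} (\<lambda>_. borel) \<Otimes>\<^sub>M borel)"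
      unfolding moe_kernel_def by simp
    then show ?thesis using A by (simp flip: nn_integral_moe_kernel[OF x] nn_integral_indicator)
  qed
  moreover have "(\<lambda>x. \<integral>\<^sup>+y. ennreal (moe_density K p al be sg x y) * indicator A (x, y) \<partial>lborel)
      \<in> borel_measurable (PiM {..<p} (\<lambda>_. borel))"
  proof (rule lborel.borel_measurable_nn_integral)
    have [measurable]: "A \<in> sets (PiM {..<p} (\<lambda>_. (borel :: real measure)) \<Otimes>\<^sub>M lborel)" using A by simp
    show "(\<lambda>(x, y). ennreal (moe_density K p al be sg x y) * indicator A (x, y))
        \<in> borel_measurable (PiM {..<p} (\<lambda>_. borel) \<Otimes>\<^sub>M lborel)"
      using borel_measurable_moe_density_pair by (simp add: case_prod_beta') measurable
  qed
  ultimately show "(\<lambda>x. emeasure (moe_kernel K p al be sg x) A) \<in> borel_measurable (PiM {..<p} (\<lambda>_. borel))"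
    by (subst measurable_cong) auto
qed

section \<open>Envelope moments of one observation\<close>

lemma (in prob_space) nn_integral_le_affine2:
  fixes f g h :: "'a \<Rightarrow> real"
  assumes f: "f \<in> borel_measurable M" "\<forall>x. f x \<ge> 0" and g: "g \<in> borel_measurable M" "\<forall>x. g x \<ge> 0"
    and c: "c0 \<ge> 0" "c1 \<ge> 0" "c2 \<ge> 0" and r: "r1 \<ge> 0" "r2 \<ge> 0"
    and fr: "(\<integral>\<^sup>+x. ennreal (f x) \<partial>M) \<le> ennreal r1" and gr: "(\<integral>\<^sup>+x. ennreal (g x) \<partial>M) \<le> ennreal r2"
    and h: "\<forall>x\<in>space M. h x \<le> c0 + c1 * f x + c2 * g x"
  shows "(\<integral>\<^sup>+x. ennreal (h x) \<partial>M) \<le> ennreal (c0 + c1 * r1 + c2 * r2)"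
  using nn_integral_le_linear_combination[of UNIV "\<lambda>b. if b then f else g" "\<lambda>b. if b then c1 else c2"
      c0 "\<lambda>b. if b then r1 else r2" h] assms
  by (simp add: UNIV_bool algebra_simps)

lemma mult_le_weighted_squares:
  fixes x y w :: real
  assumes "w > 0"
  shows "x * y \<le> (w * x\<^sup>2 + y\<^sup>2 / w) / 2"
proof -
  have "0 \<le> (w * x - y)\<^sup>2 / w" using assms by simp
  also have "(w * x - y)\<^sup>2 / w = w * x\<^sup>2 - 2 * x * y + y\<^sup>2 / w"
    using assms by (simp add: power2_eq_square diff_divide_distrib add_divide_distrib algebra_simps)
  finally show ?thesis by simp
qed

lemma one_plus_power_le:
  fixes m :: real
  assumes "m \<ge> 0"
  shows "(1 + m)^q \<le> 2^q * (1 + m^q)"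
proof -
  have "(1 + m)^q \<le> (2 * max 1 m)^q" using assms by (intro power_mono) auto
  also have "\<dots> = 2^q * (max 1 m)^q" by (simp add: power_mult_distrib)
  also have "(max 1 m)^q \<le> 1 + m^q" using assms by (simp add: max_def)
  finally show ?thesis by simp
qed

lemma one_plus_power6_le:
  fixes a e G S :: real
  assumes "0 \<le> a" "a \<le> \<bar>e\<bar> + G" "0 \<le> G" "G^6 \<le> S"
  shows "(1 + a)^6 \<le> 4096 * (1 + \<bar>e\<bar>^6 + S)"
proof -
  have "(1 + a)^6 \<le> \<bar>1 + (\<bar>e\<bar> + G)\<bar>^6" using assms by (intro power_mono) auto
  also have "\<dots> \<le> 64 * (\<bar>1\<bar>^6 + \<bar>\<bar>e\<bar> + G\<bar>^6)" by (rule abs_add_power6_le)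
  also have "\<bar>\<bar>e\<bar> + G\<bar>^6 \<le> 64 * (\<bar>\<bar>e\<bar>\<bar>^6 + \<bar>G\<bar>^6)" by (rule abs_add_power6_le)
  finally show ?thesis using assms by simp
qed

text \<open>The envelope constant: a bound on the sixth moment of \<open>1 + max\<^sub>l \<bar>y - x\<^sup>T\<beta>\<^sub>l\<bar>\<close>.\<close>

definition moe_envelope_const :: "nat \<Rightarrow> (nat \<Rightarrow> real) \<Rightarrow> real \<Rightarrow> real" where
  "moe_envelope_const K sg T = 4096 * (1 + 960 * (\<Sum>l<K. (sg l)^6) + 3510 * real K * T^6)"

lemma moe_envelope_const_nonneg: "0 \<le> moe_envelope_const K sg T"
  unfolding moe_envelope_const_def by (auto intro!: add_nonneg_nonneg sum_nonneg)

definition envelope_moment_const :: "nat \<Rightarrow> (nat \<Rightarrow> real) \<Rightarrow> real \<Rightarrow> nat \<Rightarrow> real" where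
  "envelope_moment_const K sg T q = moe_envelope_const K sg T + 4^q * (1 + T^(2 * q) * (2^q + (2 * real q)^q))"

text \<open>AM-GM with weight \<open>w\<close> separates the residual and covariate factors of the envelope.\<close>

lemma envelope_le_weighted:
  fixes a m w :: real
  assumes "0 \<le> a" "0 \<le> m" "1 \<le> w"
  shows "(1 + a)^3 * (1 + m)^q \<le> 4^q / w + w * (1 + a)^6 + 4^q / w * m^(2 * q)"
proof -
  have "(1 + a)^3 * (1 + m)^q \<le> (w * ((1 + a)^3)\<^sup>2 + ((1 + m)^q)\<^sup>2 / w) / 2"
    using assms by (intro mult_le_weighted_squares) auto
  also have "\<dots> = (w * (1 + a)^6 + (1 + m)^(2 * q) / w) / 2"
    by (simp add: power_mult[symmetric] mult.commute)
  also have "\<dots> \<le> w * (1 + a)^6 + (1 + m)^(2 * q) / w"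
    using assms by (simp add: field_simps)
  also have "(1 + m)^(2 * q) / w \<le> 4^q * (1 + m^(2 * q)) / w"
    using one_plus_power_le[OF assms(2), of "2 * q"] assms by (intro divide_right_mono) (simp_all add: power_mult)
  finally show ?thesis by (simp add: add_divide_distrib distrib_left)
qed

text \<open>Taking \<open>w = (L + 1)\<^sup>q\<^sup>-\<^sup>1\<close> absorbs the \<open>L\<^sup>q\<close> growth of the maximal coordinate.\<close>

lemma envelope_const_le:
  fixes A L T :: real
  assumes L: "L \<ge> 0" and q: "q \<ge> 2" and T: "T > 0" and A: "A \<ge> 0"
  defines "w \<equiv> (L + 1)^(q - 1)"
  shows "4^q / w + w * A + 4^q / w * (T^(2 * q) * ((2 * L)^q + (2 * real q)^q))
    \<le> (A + 4^q * (1 + T^(2 * q) * (2^q + (2 * real q)^q))) * w"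
proof -
  define U where "U = T^(2 * q)"
  have U: "U \<ge> 0" unfolding U_def using T by simp
  have w: "w \<ge> 1" unfolding w_def using L by simp
  have "L^q \<le> (L + 1)^q" using L by (intro power_mono) auto
  also have "\<dots> \<le> (L + 1)^(2 * (q - 1))" using L q by (intro power_increasing) auto
  finally have "L^q \<le> w * w" unfolding w_def by (simp add: power_mult_distrib[symmetric] power_mult power2_eq_square)
  then have "L^q / w \<le> w" using w by (simp add: divide_le_eq)
  then have "(4^q * U * 2^q) * (L^q / w) \<le> (4^q * U * 2^q) * w" using U by (intro mult_left_mono) auto
  moreover have "4^q / w * (U * (2 * L)^q) = (4^q * U * 2^q) * (L^q / w)"
    using w by (simp add: power_mult_distrib field_simps)
  ultimately have 1: "4^q / w * (U * (2 * L)^q) \<le> 4^q * U * 2^q * w" by simp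
  have "1 \<le> w * w" using mult_mono[OF w w] w by simp
  then have 2: "4^q / w \<le> 4^q * w" using w by (simp add: divide_le_eq mult_le_cancel_left1)
  have "(U * (2 * real q)^q) * (4^q / w) \<le> (U * (2 * real q)^q) * (4^q * w)"
    using 2 U by (intro mult_left_mono) auto
  then have 3: "4^q / w * (U * (2 * real q)^q) \<le> 4^q * U * (2 * real q)^q * w"
    by (simp only: mult_ac)
  have "4^q / w + w * A + 4^q / w * (U * ((2 * L)^q + (2 * real q)^q))
      = 4^q / w + w * A + (4^q / w * (U * (2 * L)^q) + 4^q / w * (U * (2 * real q)^q))"
    by (simp only: distrib_left)
  also have "\<dots> \<le> 4^q * w + w * A + (4^q * U * 2^q * w + 4^q * U * (2 * real q)^q * w)"
    using 1 2 3 by (intro add_mono order_refl)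
  also have "\<dots> = (A + 4^q * (1 + U * (2^q + (2 * real q)^q))) * w"
    by (simp only: algebra_simps)
  finally show ?thesis unfolding U_def .
qed

locale moe_observation = prob_space M for M :: "'a measure" +
  fixes K p k :: nat and al be :: "nat \<Rightarrow> nat \<Rightarrow> real" and sg :: "nat \<Rightarrow> real"
    and X :: "'a \<Rightarrow> nat \<Rightarrow> real" and Y :: "'a \<Rightarrow> real" and T B :: real
  assumes X_measurable: "X \<in> measurable M (PiM {..<p} (\<lambda>_. borel))"
    and Y_measurable: "Y \<in> borel_measurable M"
    and model: "distr M (PiM {..<p} (\<lambda>_. borel) \<Otimes>\<^sub>M borel) (\<lambda>\<omega>. (X \<omega>, Y \<omega>))
        = bind (distr M (PiM {..<p} (\<lambda>_. borel)) X) (moe_kernel K p al be sg)"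
    and k: "k < K" and sg_pos: "\<forall>l<K. sg l > 0"
    and T_pos: "T > 0" and B_ge_1: "B \<ge> 1"
    and exp_square_inner: "\<And>b. norm2_p p b \<le> B \<Longrightarrow>
        (\<integral>\<^sup>+\<omega>. ennreal (exp ((inner_p p (X \<omega>) b / T)\<^sup>2)) \<partial>M) \<le> 2"
    and beta_contrast: "\<And>l. l < K \<Longrightarrow> norm2_p p (\<lambda>j. be l j - be k j) \<le> B"
begin

lemma coordinate_measurable[measurable]: "(\<lambda>\<omega>. X \<omega> j) \<in> borel_measurable M"
  by (rule borel_measurable_coordinate[OF X_measurable])

lemma envelope_measurable[measurable]: "(\<lambda>\<omega>. moe_envelope K p be q (X \<omega>) (Y \<omega>)) \<in> borel_measurable M"
  using Y_measurable unfolding moe_envelope_def inner_p_def by measurable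

lemma nn_integral_response:
  assumes F: "F \<in> borel_measurable (PiM {..<p} (\<lambda>_. borel) \<Otimes>\<^sub>M borel)"
  shows "(\<integral>\<^sup>+\<omega>. F (X \<omega>, Y \<omega>) \<partial>M)
    = (\<integral>\<^sup>+\<omega>. (\<integral>\<^sup>+y. ennreal (moe_density K p al be sg (X \<omega>) y) * F (X \<omega>, y) \<partial>lborel) \<partial>M)"
proof -
  have K: "K > 0" using k by simp
  have "(\<integral>\<^sup>+\<omega>. F (X \<omega>, Y \<omega>) \<partial>M) = (\<integral>\<^sup>+z. F z \<partial>distr M (PiM {..<p} (\<lambda>_. borel) \<Otimes>\<^sub>M borel) (\<lambda>\<omega>. (X \<omega>, Y \<omega>)))"
    using X_measurable Y_measurable F by (subst nn_integral_distr) auto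
  also have "\<dots> = (\<integral>\<^sup>+x. (\<integral>\<^sup>+z. F z \<partial>moe_kernel K p al be sg x) \<partial>distr M (PiM {..<p} (\<lambda>_. borel)) X)"
    unfolding model using F measurable_moe_kernel[OF K sg_pos]
    by (intro nn_integral_bind) (auto simp: measurable_distr_eq1)
  also have "\<dots> = (\<integral>\<^sup>+x. (\<integral>\<^sup>+y. ennreal (moe_density K p al be sg x y) * F (x, y) \<partial>lborel)
      \<partial>distr M (PiM {..<p} (\<lambda>_. borel)) X)"
    using F by (intro nn_integral_cong) (simp add: nn_integral_moe_kernel)
  also have "\<dots> = (\<integral>\<^sup>+\<omega>. (\<integral>\<^sup>+y. ennreal (moe_density K p al be sg (X \<omega>) y) * F (X \<omega>, y) \<partial>lborel) \<partial>M)"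
  proof -
    have "(\<lambda>z. ennreal (moe_density K p al be sg (fst z) (snd z)) * F (fst z, snd z))
        \<in> borel_measurable (PiM {..<p} (\<lambda>_. borel) \<Otimes>\<^sub>M lborel)"
      using F borel_measurable_moe_density_pair by (simp cong: measurable_cong_sets)
    then have "(\<lambda>x. \<integral>\<^sup>+y. ennreal (moe_density K p al be sg x y) * F (x, y) \<partial>lborel)
        \<in> borel_measurable (PiM {..<p} (\<lambda>_. borel))"
      by (intro lborel.borel_measurable_nn_integral) (simp add: case_prod_beta')
    then show ?thesis by (subst nn_integral_distr[OF X_measurable]) simp_all
  qed
  finally show ?thesis .
qed

lemma inner_contrast_power6_le:
  assumes "l < K"
  shows "(\<integral>\<^sup>+\<omega>. ennreal (\<bar>inner_p p (X \<omega>) (be l) - inner_p p (X \<omega>) (be k)\<bar>^6) \<partial>M) \<le> ennreal (54 * T^6)"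
proof -
  have "(\<lambda>\<omega>. inner_p p (X \<omega>) (\<lambda>j. be l j - be k j)) \<in> borel_measurable M"
    unfolding inner_p_def by measurable
  from nn_integral_abs_power_le_of_exp_square[OF this T_pos, of 3]
  show ?thesis using exp_square_inner[OF beta_contrast[OF assms]] by (simp add: inner_p_diff)
qed

lemma residual_power6_le:
  "(\<integral>\<^sup>+\<omega>. ennreal (\<bar>Y \<omega> - inner_p p (X \<omega>) (be k)\<bar>^6) \<partial>M)
    \<le> ennreal (960 * (\<Sum>l<K. (sg l)^6) + 3456 * real K * T^6)"
proof -
  have [measurable]: "(\<lambda>z::(nat \<Rightarrow> real) \<times> real. ennreal (\<bar>snd z - inner_p p (fst z) (be k)\<bar>^6))
      \<in> borel_measurable (PiM {..<p} (\<lambda>_. borel) \<Otimes>\<^sub>M borel)"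
    unfolding inner_p_def by measurable
  have "(\<integral>\<^sup>+\<omega>. ennreal (\<bar>Y \<omega> - inner_p p (X \<omega>) (be k)\<bar>^6) \<partial>M)
      = (\<integral>\<^sup>+\<omega>. (\<integral>\<^sup>+y. ennreal (moe_density K p al be sg (X \<omega>) y * \<bar>y - inner_p p (X \<omega>) (be k)\<bar>^6) \<partial>lborel) \<partial>M)"
    using nn_integral_response[of "\<lambda>z. ennreal (\<bar>snd z - inner_p p (fst z) (be k)\<bar>^6)"]
    by (simp add: ennreal_mult' moe_density_nonneg[OF sg_pos])
  also have "\<dots> \<le> (\<integral>\<^sup>+\<omega>. ennreal (64 * (\<Sum>l<K. 15 * (sg l)^6 + \<bar>inner_p p (X \<omega>) (be l) - inner_p p (X \<omega>) (be k)\<bar>^6)) \<partial>M)"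
    by (intro nn_integral_mono nn_integral_moe_residual_power6_le[OF sg_pos])
  also have "\<dots> \<le> ennreal (64 * (15 * (\<Sum>l<K. (sg l)^6)) + (\<Sum>l\<in>{..<K}. 64 * (54 * T^6)))"
  proof (rule nn_integral_le_linear_combination)
    show "\<forall>\<omega>\<in>space M. 64 * (\<Sum>l<K. 15 * (sg l)^6 + \<bar>inner_p p (X \<omega>) (be l) - inner_p p (X \<omega>) (be k)\<bar>^6)
        \<le> 64 * (15 * (\<Sum>l<K. (sg l)^6))
          + (\<Sum>l\<in>{..<K}. 64 * \<bar>inner_p p (X \<omega>) (be l) - inner_p p (X \<omega>) (be k)\<bar>^6)"
      by (simp add: sum.distrib sum_distrib_left)
    show "\<forall>l\<in>{..<K}. (\<lambda>\<omega>. \<bar>inner_p p (X \<omega>) (be l) - inner_p p (X \<omega>) (be k)\<bar>^6) \<in> borel_measurable M"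
      unfolding inner_p_def by measurable
  qed (use inner_contrast_power6_le sg_pos T_pos in \<open>auto intro!: sum_nonneg add_nonneg_nonneg\<close>)
  finally show ?thesis by (simp add: mult.assoc mult.left_commute)
qed

lemma max_residual_power6_le:
  "(\<integral>\<^sup>+\<omega>. ennreal ((1 + sup_norm_p K (\<lambda>l. Y \<omega> - inner_p p (X \<omega>) (be l)))^6) \<partial>M)
    \<le> ennreal (moe_envelope_const K sg T)"
proof -
  define e where "e \<omega> = Y \<omega> - inner_p p (X \<omega>) (be k)" for \<omega>
  define g where "g l \<omega> = inner_p p (X \<omega>) (be l) - inner_p p (X \<omega>) (be k)" for l \<omega>
  have [measurable]: "Y \<in> borel_measurable M" by (rule Y_measurable)
  have "(\<integral>\<^sup>+\<omega>. ennreal ((1 + sup_norm_p K (\<lambda>l. Y \<omega> - inner_p p (X \<omega>) (be l)))^6) \<partial>M)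
      \<le> ennreal (4096 + 4096 * (960 * (\<Sum>l<K. (sg l)^6) + 3456 * real K * T^6) + 4096 * (real K * (54 * T^6)))"
  proof (rule nn_integral_le_affine2)
    show "(\<integral>\<^sup>+\<omega>. ennreal (\<bar>e \<omega>\<bar>^6) \<partial>M) \<le> ennreal (960 * (\<Sum>l<K. (sg l)^6) + 3456 * real K * T^6)"
      unfolding e_def by (rule residual_power6_le)
    have "(\<integral>\<^sup>+\<omega>. ennreal (\<Sum>l<K. \<bar>g l \<omega>\<bar>^6) \<partial>M) \<le> ennreal (0 + (\<Sum>l\<in>{..<K}. 1 * (54 * T^6)))"
      using inner_contrast_power6_le T_pos unfolding g_def
      by (intro nn_integral_le_linear_combination[where f = "\<lambda>l \<omega>. \<bar>g l \<omega>\<bar>^6" and c = "\<lambda>_. 1",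
            unfolded g_def]) (auto simp: inner_p_def)
    then show "(\<integral>\<^sup>+\<omega>. ennreal (\<Sum>l<K. \<bar>g l \<omega>\<bar>^6) \<partial>M) \<le> ennreal (real K * (54 * T^6))" by simp
    show "\<forall>\<omega>\<in>space M. (1 + sup_norm_p K (\<lambda>l. Y \<omega> - inner_p p (X \<omega>) (be l)))^6
        \<le> 4096 + 4096 * \<bar>e \<omega>\<bar>^6 + 4096 * (\<Sum>l<K. \<bar>g l \<omega>\<bar>^6)"
    proof
      fix \<omega>
      define G where "G = sup_norm_p K (\<lambda>l. g l \<omega>)"
      have "\<bar>Y \<omega> - inner_p p (X \<omega>) (be l)\<bar> \<le> \<bar>e \<omega>\<bar> + G" if "l < K" for l
        using abs_le_sup_norm_p[OF that, of "\<lambda>l. g l \<omega>"] unfolding e_def g_def G_def by linarith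
      then have a: "sup_norm_p K (\<lambda>l. Y \<omega> - inner_p p (X \<omega>) (be l)) \<le> \<bar>e \<omega>\<bar> + G"
        using sup_norm_p_nonneg[of K "\<lambda>l. g l \<omega>"] unfolding G_def
        by (intro sup_norm_p_le) auto
      have G: "G^6 \<le> (\<Sum>l<K. \<bar>g l \<omega>\<bar>^6)" unfolding G_def by (rule sup_norm_p_power_le_sum) simp
      have "(1 + sup_norm_p K (\<lambda>l. Y \<omega> - inner_p p (X \<omega>) (be l)))^6
        \<le> 4096 * (1 + \<bar>e \<omega>\<bar>^6 + (\<Sum>l<K. \<bar>g l \<omega>\<bar>^6))"
        using one_plus_power6_le[OF sup_norm_p_nonneg a _ G] unfolding G_def by (simp only: sup_norm_p_nonneg)
      then show "(1 + sup_norm_p K (\<lambda>l. Y \<omega> - inner_p p (X \<omega>) (be l)))^6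
        \<le> 4096 + 4096 * \<bar>e \<omega>\<bar>^6 + 4096 * (\<Sum>l<K. \<bar>g l \<omega>\<bar>^6)"
        by (simp only: distrib_left mult_1_right)
    qed
  qed (use sg_pos T_pos in \<open>auto simp: e_def g_def inner_p_def intro!: sum_nonneg add_nonneg_nonneg\<close>)
  also have "\<dots> = ennreal (moe_envelope_const K sg T)"
    unfolding moe_envelope_const_def by (simp add: algebra_simps)
  finally show ?thesis .
qed

lemma max_coordinate_power_le:
  assumes "q > 0"
  shows "(\<integral>\<^sup>+\<omega>. ennreal ((sup_norm_p p (X \<omega>))^(2 * q)) \<partial>M)
     \<le> ennreal (T^(2 * q) * ((2 * ln (2 * (real p + 1)))^q + (2 * real q)^q))"
proof (rule nn_integral_sup_norm_p_power_le[OF _ T_pos assms], safe)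
  fix j assume j: "j < p"
  define e where "e = (\<lambda>i. if i = j then 1 else (0::real))"
  have "norm2_p p e = 1" unfolding norm2_p_def e_def using j
    by (simp add: if_distrib[of "\<lambda>z. z\<^sup>2"] cong: if_cong)
  moreover have "inner_p p x e = x j" for x unfolding inner_p_def e_def using j
    by (simp add: if_distrib[of "\<lambda>z. x _ * z"] cong: if_cong)
  ultimately show "(\<integral>\<^sup>+\<omega>. ennreal (exp ((X \<omega> j / T)\<^sup>2)) \<partial>M) \<le> 2"
    using exp_square_inner[of e] B_ge_1 by simp
qed simp

lemma envelope_moment_le:
  assumes q: "q \<ge> 2"
  shows "(\<integral>\<^sup>+\<omega>. ennreal (moe_envelope K p be q (X \<omega>) (Y \<omega>)) \<partial>M)
    \<le> ennreal (envelope_moment_const K sg T q * (ln (2 * (real p + 1)) + 1)^(q - 1))"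
proof -
  define a where "a \<omega> = sup_norm_p K (\<lambda>l. Y \<omega> - inner_p p (X \<omega>) (be l))" for \<omega>
  define m where "m \<omega> = sup_norm_p p (X \<omega>)" for \<omega>
  define L where "L = ln (2 * (real p + 1))"
  define w where "w = (L + 1)^(q - 1)"
  have L: "L \<ge> 0" unfolding L_def by simp
  have w: "w \<ge> 1" unfolding w_def using L by simp
  have a: "a \<omega> \<ge> 0" and m: "m \<omega> \<ge> 0" for \<omega> unfolding a_def m_def by (rule sup_norm_p_nonneg)+
  have [measurable]: "Y \<in> borel_measurable M" by (rule Y_measurable)
  have [measurable]: "a \<in> borel_measurable M" "m \<in> borel_measurable M"
    unfolding a_def m_def inner_p_def by measurable
  have "(\<integral>\<^sup>+\<omega>. ennreal ((1 + a \<omega>)^3 * (1 + m \<omega>)^q) \<partial>M)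
      \<le> ennreal (4^q / w + w * moe_envelope_const K sg T + 4^q / w * (T^(2 * q) * ((2 * L)^q + (2 * real q)^q)))"
  proof (rule nn_integral_le_affine2)
    show "(\<integral>\<^sup>+\<omega>. ennreal ((1 + a \<omega>)^6) \<partial>M) \<le> ennreal (moe_envelope_const K sg T)"
      unfolding a_def by (rule max_residual_power6_le)
    show "(\<integral>\<^sup>+\<omega>. ennreal (m \<omega>^(2 * q)) \<partial>M) \<le> ennreal (T^(2 * q) * ((2 * L)^q + (2 * real q)^q))"
      unfolding m_def L_def using max_coordinate_power_le q by simp
    show "\<forall>\<omega>\<in>space M. (1 + a \<omega>)^3 * (1 + m \<omega>)^q \<le> 4^q / w + w * (1 + a \<omega>)^6 + 4^q / w * m \<omega>^(2 * q)"
      using w a m by (intro ballI envelope_le_weighted) auto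
  qed (use w T_pos L moe_envelope_const_nonneg a m in auto)
  also have "\<dots> \<le> ennreal (envelope_moment_const K sg T q * w)"
    unfolding envelope_moment_const_def w_def
    by (intro ennreal_leI envelope_const_le L q T_pos moe_envelope_const_nonneg)
  finally show ?thesis unfolding a_def m_def L_def w_def moe_envelope_def .
qed
end

section \<open>From moment bounds to convergence in probability\<close>

lemma (in prob_space) prob_quadratic_bound_tail_le:
  fixes Z D A1 A2 :: "'a \<Rightarrow> real"
  assumes bound: "\<And>\<omega>. \<omega> \<in> space M \<Longrightarrow> D \<omega> \<le> s \<Longrightarrow> \<bar>Z \<omega>\<bar> \<le> C * (D \<omega> * A1 \<omega> + (D \<omega>)\<^sup>2 * A2 \<omega>)"
    and meas: "D \<in> borel_measurable M" "A1 \<in> borel_measurable M" "A2 \<in> borel_measurable M"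
    and nonneg: "\<And>\<omega>. D \<omega> \<ge> 0" "\<And>\<omega>. A1 \<omega> \<ge> 0" "\<And>\<omega>. A2 \<omega> \<ge> 0"
    and B: "b \<le> B" "B \<le> s" and C: "C \<ge> 0"
  shows "prob {\<omega> \<in> space M. \<epsilon> < \<bar>Z \<omega>\<bar>}
    \<le> prob {\<omega> \<in> space M. b < \<bar>D \<omega>\<bar>} + prob {\<omega> \<in> space M. \<epsilon>/2 \<le> C * B * A1 \<omega>}
      + prob {\<omega> \<in> space M. \<epsilon>/2 \<le> C * B\<^sup>2 * A2 \<omega>}"
proof -
  have [measurable]: "D \<in> borel_measurable M" "A1 \<in> borel_measurable M" "A2 \<in> borel_measurable M"
    by (fact meas)+
  have "{\<omega> \<in> space M. \<epsilon> < \<bar>Z \<omega>\<bar>} \<subseteq> {\<omega> \<in> space M. b < \<bar>D \<omega>\<bar>}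
      \<union> {\<omega> \<in> space M. \<epsilon>/2 \<le> C * B * A1 \<omega>} \<union> {\<omega> \<in> space M. \<epsilon>/2 \<le> C * B\<^sup>2 * A2 \<omega>}"
  proof
    fix \<omega> assume \<omega>: "\<omega> \<in> {\<omega> \<in> space M. \<epsilon> < \<bar>Z \<omega>\<bar>}"
    show "\<omega> \<in> {\<omega> \<in> space M. b < \<bar>D \<omega>\<bar>} \<union> {\<omega> \<in> space M. \<epsilon>/2 \<le> C * B * A1 \<omega>}
        \<union> {\<omega> \<in> space M. \<epsilon>/2 \<le> C * B\<^sup>2 * A2 \<omega>}"
    proof (cases "b < \<bar>D \<omega>\<bar> \<or> \<epsilon>/2 \<le> C * B * A1 \<omega>")
      case False
      then have D: "D \<omega> \<le> B" using nonneg(1)[of \<omega>] B by linarith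
      have "\<epsilon> < C * (D \<omega> * A1 \<omega> + (D \<omega>)\<^sup>2 * A2 \<omega>)" using \<omega> bound D B by fastforce
      also have "\<dots> \<le> C * (B * A1 \<omega> + B\<^sup>2 * A2 \<omega>)"
        using D nonneg C by (intro mult_left_mono add_mono mult_right_mono power_mono) auto
      finally have "\<epsilon>/2 \<le> C * B\<^sup>2 * A2 \<omega>" using False by (simp add: algebra_simps)
      then show ?thesis using \<omega> by simp
    qed (use \<omega> in auto)
  qed
  then have "prob {\<omega> \<in> space M. \<epsilon> < \<bar>Z \<omega>\<bar>} \<le> prob ({\<omega> \<in> space M. b < \<bar>D \<omega>\<bar>}
      \<union> {\<omega> \<in> space M. \<epsilon>/2 \<le> C * B * A1 \<omega>} \<union> {\<omega> \<in> space M. \<epsilon>/2 \<le> C * B\<^sup>2 * A2 \<omega>})"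
    by (intro finite_measure_mono) auto
  also have "\<dots> \<le> prob {\<omega> \<in> space M. b < \<bar>D \<omega>\<bar>} + prob {\<omega> \<in> space M. \<epsilon>/2 \<le> C * B * A1 \<omega>}
      + prob {\<omega> \<in> space M. \<epsilon>/2 \<le> C * B\<^sup>2 * A2 \<omega>}"
    by (intro order_trans[OF measure_Un_le] add_mono measure_Un_le) auto
  finally show ?thesis .
qed

lemma (in prob_space) o_p1_of_quadratic_bound:
  fixes Z D U V :: "nat \<Rightarrow> 'a \<Rightarrow> real" and eta L :: "nat \<Rightarrow> real"
  assumes D: "O_p M D eta"
    and bound: "\<And>n \<omega>. \<omega> \<in> space M \<Longrightarrow> D n \<omega> \<le> s \<Longrightarrow> \<bar>Z n \<omega>\<bar> \<le> C * (D n \<omega> * U n \<omega> + (D n \<omega>)\<^sup>2 * V n \<omega>)"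
    and meas: "\<And>n. D n \<in> borel_measurable M" "\<And>n. U n \<in> borel_measurable M" "\<And>n. V n \<in> borel_measurable M"
    and nonneg: "\<And>n \<omega>. D n \<omega> \<ge> 0" "\<And>n \<omega>. U n \<omega> \<ge> 0" "\<And>n \<omega>. V n \<omega> \<ge> 0"
    and mom1: "\<And>n. (\<integral>\<^sup>+\<omega>. ennreal (U n \<omega>) \<partial>M) \<le> ennreal (CU * L n)"
    and mom2: "\<And>n. (\<integral>\<^sup>+\<omega>. ennreal (V n \<omega>) \<partial>M) \<le> ennreal (CV * (L n)\<^sup>2)"
    and rate: "(\<lambda>n. eta n * L n) \<longlonglongrightarrow> 0" and L: "\<And>n. L n \<ge> 1"
    and pos: "s > 0" "C \<ge> 0" "CU \<ge> 0" "CV \<ge> 0"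
  shows "o_p1 M Z"
  unfolding o_p1_def
proof (intro allI impI order_tendstoI)
  fix \<epsilon> e :: real assume \<epsilon>: "\<epsilon> > 0" and e: "e > 0"
  obtain Cc N where N: "\<forall>n\<ge>N. prob {\<omega> \<in> space M. \<bar>D n \<omega>\<bar> > Cc * eta n} < e/2"
    using D e unfolding O_p_def by (meson half_gt_zero)
  define B where "B n = \<bar>Cc\<bar> * \<bar>eta n\<bar>" for n
  have BL: "(\<lambda>n. B n * L n) \<longlonglongrightarrow> 0"
    using tendsto_mult[OF tendsto_const[of "\<bar>Cc\<bar>"] tendsto_rabs_zero[OF rate]] L
    unfolding B_def by (simp add: abs_mult mult.assoc abs_of_pos less_le_trans[OF zero_less_one])
  have markov1: "prob {\<omega> \<in> space M. \<epsilon>/2 \<le> C * B n * U n \<omega>} \<le> 2 * C * CU / \<epsilon> * (B n * L n)" for n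
    using prob_scaled_ge_le[OF meas(2) _ _ _ mom1, of "C * B n" "\<epsilon>/2"] pos L[of n] \<epsilon>
    by (simp add: B_def field_simps)
  have markov2: "prob {\<omega> \<in> space M. \<epsilon>/2 \<le> C * (B n)\<^sup>2 * V n \<omega>} \<le> 2 * C * CV / \<epsilon> * (B n * L n)\<^sup>2" for n
    using prob_scaled_ge_le[OF meas(3) _ _ _ mom2, of "C * (B n)\<^sup>2" "\<epsilon>/2"] pos \<epsilon>
    by (simp add: field_simps power_mult_distrib)
  have "(\<lambda>n. 2 * C * CU / \<epsilon> * (B n * L n)) \<longlonglongrightarrow> 2 * C * CU / \<epsilon> * 0"
    "(\<lambda>n. 2 * C * CV / \<epsilon> * (B n * L n)\<^sup>2) \<longlonglongrightarrow> 2 * C * CV / \<epsilon> * 0\<^sup>2"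
    by (intro tendsto_intros BL)+
  then have "eventually (\<lambda>n. 2 * C * CU / \<epsilon> * (B n * L n) < e/4) sequentially"
    "eventually (\<lambda>n. 2 * C * CV / \<epsilon> * (B n * L n)\<^sup>2 < e/4) sequentially"
    "eventually (\<lambda>n. B n * L n < s) sequentially"
    using e pos order_tendstoD(2)[OF BL, of s] by (auto dest!: order_tendstoD(2)[of _ 0 _ "e/4"])
  moreover have "eventually (\<lambda>n. n \<ge> N) sequentially" by (rule eventually_ge_at_top)
  ultimately show "eventually (\<lambda>n. prob {\<omega> \<in> space M. \<bar>Z n \<omega>\<bar> > \<epsilon>} < e) sequentially"
  proof eventually_elim
    case (elim n)
    have "B n * 1 \<le> B n * L n" using L[of n] by (intro mult_left_mono) (auto simp: B_def)
    then have "prob {\<omega> \<in> space M. \<epsilon> < \<bar>Z n \<omega>\<bar>}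
        \<le> prob {\<omega> \<in> space M. Cc * eta n < \<bar>D n \<omega>\<bar>} + prob {\<omega> \<in> space M. \<epsilon>/2 \<le> C * B n * U n \<omega>}
          + prob {\<omega> \<in> space M. \<epsilon>/2 \<le> C * (B n)\<^sup>2 * V n \<omega>}"
      using elim pos by (intro prob_quadratic_bound_tail_le[OF bound meas nonneg])
        (auto simp: B_def abs_mult[symmetric])
    also have "\<dots> < e/2 + e/4 + e/4" using elim N markov1[of n] markov2[of n] by fastforce
    finally show ?case by simp
  qed
qed (simp add: less_le_trans[OF _ measure_nonneg])

lemma one_le_ln_of_ge_3:
  fixes x :: real
  assumes "x \<ge> 3"
  shows "1 \<le> ln x"
proof -
  have "exp 1 \<le> x" using exp_le assms by linarith
  then show ?thesis using assms by (subst ln_ge_iff) auto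
qed

lemma ln_double_succ_le:
  fixes x :: real
  assumes "x \<ge> 1"
  shows "ln (2 * (x + 1)) + 1 \<le> ln x + 3"
proof -
  have "2 \<le> exp (1::real)" using exp_ge_add_one_self[of 1] by simp
  then have "(4::real) \<le> exp 1 * exp 1" using mult_mono[of 2 "exp 1" 2 "exp (1::real)"] by simp
  also have "exp 1 * exp 1 = exp (2::real)" by (simp add: exp_add[symmetric])
  finally have "ln 4 \<le> ln (exp (2::real))" by (subst ln_le_cancel_iff) auto
  then have "ln 4 \<le> (2::real)" by simp
  moreover have "ln (2 * (x + 1)) \<le> ln (4 * x)" using assms by simp
  moreover have "ln (4 * x) = ln 4 + ln x" using assms by (simp add: ln_mult)
  ultimately show ?thesis by linarith
qed

lemma ln_over_sqrt_tendsto_zero: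
  fixes p :: "nat \<Rightarrow> nat"
  assumes "(\<lambda>n. ln (real (p n))) \<in> o(\<lambda>n. real n powr (1/4) / sqrt (ln (real n)))"
  shows "(\<lambda>n. ln (real (p n)) / sqrt (real n)) \<longlonglongrightarrow> 0"
proof -
  define g where "g n = real n powr (1/4) / sqrt (ln (real n))" for n :: nat
  have "(\<lambda>n. (ln (real (p n)) / g n) * (g n / sqrt (real n))) \<longlonglongrightarrow> 0 * 0"
  proof (intro tendsto_mult)
    show "(\<lambda>n. ln (real (p n)) / g n) \<longlonglongrightarrow> 0" using smalloD_tendsto[OF assms] unfolding g_def .
    show "(\<lambda>n. g n / sqrt (real n)) \<longlonglongrightarrow> 0" unfolding g_def by real_asymp
  qed
  moreover have "eventually (\<lambda>n. (ln (real (p n)) / g n) * (g n / sqrt (real n))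
      = ln (real (p n)) / sqrt (real n)) sequentially"
  proof (rule eventually_sequentiallyI)
    fix n :: nat assume "n \<ge> 2"
    then have "g n \<noteq> 0" unfolding g_def by simp
    then show "(ln (real (p n)) / g n) * (g n / sqrt (real n)) = ln (real (p n)) / sqrt (real n)" by simp
  qed
  ultimately show ?thesis by (simp add: Lim_transform_eventually)
qed

lemma square_eta_log_le:
  fixes n p \<eta> :: real
  assumes n: "n \<ge> 3" and p: "p \<ge> 1"
  defines "r \<equiv> sqrt n * ln (n * p) * \<eta>\<^sup>2"
  shows "(\<eta> * (ln (2 * (p + 1)) + 1))\<^sup>2 \<le> 2 * (r * (ln p / sqrt n)) + 18 * r"
proof -
  have lnn: "1 \<le> ln n" by (rule one_le_ln_of_ge_3[OF n])
  have lp: "0 \<le> ln p" using p by simp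
  have lnnp: "ln (n * p) = ln n + ln p" using p n by (simp add: ln_mult)
  have "1 \<le> sqrt n * ln (n * p)" unfolding lnnp using n lnn lp by (intro mult_ge1_I) auto
  then have r: "\<eta>\<^sup>2 \<le> r" unfolding r_def by (simp add: mult_le_cancel_right1)
  have "(ln p)\<^sup>2 \<le> ln p * ln (n * p)" unfolding lnnp power2_eq_square using lnn lp by (intro mult_left_mono) auto
  then have "\<eta>\<^sup>2 * (ln p)\<^sup>2 \<le> \<eta>\<^sup>2 * (ln p * ln (n * p))" by (rule mult_left_mono) simp
  also have "\<dots> = r * (ln p / sqrt n)" unfolding r_def using n by (simp add: field_simps)
  finally have rq: "\<eta>\<^sup>2 * (ln p)\<^sup>2 \<le> r * (ln p / sqrt n)" .
  have "(\<eta> * (ln (2 * (p + 1)) + 1))\<^sup>2 = \<eta>\<^sup>2 * (ln (2 * (p + 1)) + 1)\<^sup>2" by (simp add: power_mult_distrib)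
  also have "\<dots> \<le> \<eta>\<^sup>2 * (ln p + 3)\<^sup>2"
    using ln_double_succ_le[OF p] ln_ge_zero[of "2 * (p + 1)"] p by (intro mult_left_mono power_mono) auto
  also have "\<dots> \<le> \<eta>\<^sup>2 * (2 * (ln p)\<^sup>2 + 18)"
    using zero_le_power2[of "ln p - 3"] by (intro mult_left_mono) (auto simp: power2_eq_square algebra_simps)
  also have "\<dots> = 2 * (\<eta>\<^sup>2 * (ln p)\<^sup>2) + 18 * \<eta>\<^sup>2" by (simp add: algebra_simps)
  finally show ?thesis using r rq by linarith
qed

lemma eta_log_dim_tendsto_zero:
  fixes p :: "nat \<Rightarrow> nat" and eta :: "nat \<Rightarrow> real"
  assumes p: "filterlim p at_top sequentially"
    and logp: "(\<lambda>n. ln (real (p n))) \<in> o(\<lambda>n. real n powr (1/4) / sqrt (ln (real n)))"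
    and eta: "(\<lambda>n. sqrt (real n) * ln (real n * real (p n)) * (eta n)\<^sup>2) \<longlonglongrightarrow> 0"
  shows "(\<lambda>n. eta n * (ln (2 * (real (p n) + 1)) + 1)) \<longlonglongrightarrow> 0"
proof -
  define r where "r n = sqrt (real n) * ln (real n * real (p n)) * (eta n)\<^sup>2" for n
  have "eventually (\<lambda>n. p n \<ge> 1) sequentially" using p by (simp add: filterlim_at_top)
  then have "eventually (\<lambda>n. (eta n * (ln (2 * (real (p n) + 1)) + 1))\<^sup>2
      \<le> 2 * (r n * (ln (real (p n)) / sqrt (real n))) + 18 * r n) sequentially"
    using eventually_ge_at_top[of "3::nat"]
  proof eventually_elim
    case (elim n)
    then show ?case unfolding r_def by (intro square_eta_log_le) auto
  qed
  moreover have "(\<lambda>n. 2 * (r n * (ln (real (p n)) / sqrt (real n))) + 18 * r n) \<longlonglongrightarrow> 2 * (0 * 0) + 18 * 0"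
    using eta ln_over_sqrt_tendsto_zero[OF logp] unfolding r_def by (intro tendsto_intros)
  ultimately have "(\<lambda>n. (eta n * (ln (2 * (real (p n) + 1)) + 1))\<^sup>2) \<longlonglongrightarrow> 0"
    using tendsto_sandwich[of "\<lambda>_. 0" "\<lambda>n. (eta n * (ln (2 * (real (p n) + 1)) + 1))\<^sup>2"] by simp
  then have "(\<lambda>n. sqrt ((eta n * (ln (2 * (real (p n) + 1)) + 1))\<^sup>2)) \<longlonglongrightarrow> sqrt 0"
    by (rule tendsto_real_sqrt)
  then show ?thesis by (simp add: tendsto_rabs_zero_iff)
qed

lemma moe_observationI:
  fixes M :: "'a measure" and X :: "'a \<Rightarrow> nat \<Rightarrow> real" and Y :: "'a \<Rightarrow> real"
  assumes M: "prob_space M"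
    and X: "X \<in> measurable M (PiM {..<p} (\<lambda>_. borel))" and Y: "Y \<in> borel_measurable M"
    and model: "distr M (PiM {..<p} (\<lambda>_. borel) \<Otimes>\<^sub>M borel) (\<lambda>\<omega>. (X \<omega>, Y \<omega>)) =
                  bind (distr M (PiM {..<p} (\<lambda>_. borel)) X)
                    (\<lambda>x. distr (density lborel (\<lambda>y. ennreal (moe_density K p al be sg x y)))
                               (PiM {..<p} (\<lambda>_. borel) \<Otimes>\<^sub>M borel) (\<lambda>y. (x, y)))"
    and k: "k < K" and sg: "\<forall>l<K. sg l > 0"
    and inv: "is_inv_sqrt p R S" and S: "\<forall>i<p. \<forall>j<p. S i j = S j i"
    and op: "\<forall>u. norm2_p p (matvec p S u) \<le> C * norm2_p p u"
    and SG: "\<forall>u. norm2_p p u = 1 \<longrightarrow> subgaussian M (\<lambda>\<omega>. inner_p p u (matvec p R (X \<omega>)))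
                 \<and> psi2_norm M (\<lambda>\<omega>. inner_p p u (matvec p R (X \<omega>))) \<le> Cg"
    and beta: "\<forall>l<K. norm2_p p (\<lambda>j. be l j - be k j) \<le> Cb"
  shows "moe_observation M K p k al be sg X Y (sqrt (max C 1) * max Cb 1 * (\<bar>Cg\<bar> + 1)) (max Cb 1)"
proof -
  interpret prob_space M by (rule M)
  show ?thesis
  proof
    show "0 < sqrt (max C 1) * max Cb 1 * (\<bar>Cg\<bar> + 1)" by (intro mult_pos_pos) auto
    show "norm2_p p b \<le> max Cb 1 \<Longrightarrow> (\<integral>\<^sup>+\<omega>. ennreal (exp ((inner_p p (X \<omega>) b
        / (sqrt (max C 1) * max Cb 1 * (\<bar>Cg\<bar> + 1)))\<^sup>2)) \<partial>M) \<le> 2" for b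
      by (rule nn_integral_exp_square_inner_whitened_le[OF inv S op SG]) auto
  qed (use X Y model k sg beta in \<open>auto simp: moe_kernel_def intro: order_trans\<close>)
qed

lemma (in prob_space) borel_measurable_envelope_average:
  assumes "\<And>i. i < n \<Longrightarrow> moe_observation M K p k al be sg (X i) (Y i) T B"
  shows "(\<lambda>\<omega>. (1 / real n) * (\<Sum>i<n. moe_envelope K p be q (X i \<omega>) (Y i \<omega>))) \<in> borel_measurable M"
  using moe_observation.envelope_measurable[OF assms] by auto

lemma (in prob_space) envelope_average_moment_le:
  assumes obs: "\<And>i. i < n \<Longrightarrow> moe_observation M K p k al be sg (X i) (Y i) T B" and q: "q \<ge> 2"
  shows "(\<integral>\<^sup>+\<omega>. ennreal ((1 / real n) * (\<Sum>i<n. moe_envelope K p be q (X i \<omega>) (Y i \<omega>))) \<partial>M)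
    \<le> ennreal (envelope_moment_const K sg T q * (ln (2 * (real p + 1)) + 1)^(q - 1))"
proof (rule nn_integral_average_le)
  show "\<forall>i<n. (\<lambda>\<omega>. moe_envelope K p be q (X i \<omega>) (Y i \<omega>)) \<in> borel_measurable M"
    using moe_observation.envelope_measurable[OF obs] by blast
  show "\<forall>i<n. \<forall>\<omega>. moe_envelope K p be q (X i \<omega>) (Y i \<omega>) \<ge> 0"
    unfolding moe_envelope_def by (auto intro!: mult_nonneg_nonneg zero_le_power add_nonneg_nonneg sup_norm_p_nonneg)
  show "\<forall>i<n. (\<integral>\<^sup>+\<omega>. ennreal (moe_envelope K p be q (X i \<omega>) (Y i \<omega>)) \<partial>M)
      \<le> ennreal (envelope_moment_const K sg T q * (ln (2 * (real p + 1)) + 1)^(q - 1))"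
    using moe_observation.envelope_moment_le[OF obs q] by blast
  show "0 \<le> envelope_moment_const K sg T q * (ln (2 * (real p + 1)) + 1)^(q - 1)"
    unfolding envelope_moment_const_def using moe_envelope_const_nonneg by simp
qed

lemma moe_observation_samples:
  fixes M :: "'a measure" and X :: "nat \<Rightarrow> nat \<Rightarrow> 'a \<Rightarrow> nat \<Rightarrow> real" and Y :: "nat \<Rightarrow> nat \<Rightarrow> 'a \<Rightarrow> real"
  assumes M: "prob_space M"
    and X: "\<forall>n i. i < n \<longrightarrow> X n i \<in> measurable M (PiM {..<p n} (\<lambda>_. borel))"
    and Y: "\<forall>n i. i < n \<longrightarrow> Y n i \<in> borel_measurable M"
    and model: "\<forall>n i. i < n \<longrightarrow>
                  distr M (PiM {..<p n} (\<lambda>_. borel) \<Otimes>\<^sub>M borel) (\<lambda>\<omega>. (X n i \<omega>, Y n i \<omega>)) =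
                  bind (distr M (PiM {..<p n} (\<lambda>_. borel)) (X n i))
                    (\<lambda>x. distr (density lborel (\<lambda>y. ennreal (moe_density K (p n) (alpha n) (beta n) sig x y)))
                               (PiM {..<p n} (\<lambda>_. borel) \<Otimes>\<^sub>M borel) (\<lambda>y. (x, y)))"
    and k: "k < K" and sig: "\<forall>l<K. sig l > 0"
    and R: "\<forall>n. is_inv_sqrt (p n) (R n) (S n)" and S: "\<forall>n. \<forall>i<p n. \<forall>j<p n. S n i j = S n j i"
    and op: "\<forall>n u. norm2_p (p n) (matvec (p n) (S n) u) \<le> C * norm2_p (p n) u"
    and subg: "\<exists>C. \<forall>n i u. i < n \<and> norm2_p (p n) u = 1 \<longrightarrow>
                 subgaussian M (\<lambda>\<omega>. inner_p (p n) u (matvec (p n) (R n) (X n i \<omega>))) \<and>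
                 psi2_norm M (\<lambda>\<omega>. inner_p (p n) u (matvec (p n) (R n) (X n i \<omega>))) \<le> C"
    and beta: "\<exists>C. \<forall>n l l'. l < K \<and> l' < K \<longrightarrow> norm2_p (p n) (\<lambda>j. beta n l j - beta n l' j) \<le> C"
  obtains T B where "\<And>n i. i < n \<Longrightarrow> moe_observation M K (p n) k (alpha n) (beta n) sig (X n i) (Y n i) T B"
proof -
  from subg beta obtain Cg Cb where
    "\<forall>n i u. i < n \<and> norm2_p (p n) u = 1 \<longrightarrow>
       subgaussian M (\<lambda>\<omega>. inner_p (p n) u (matvec (p n) (R n) (X n i \<omega>))) \<and>
       psi2_norm M (\<lambda>\<omega>. inner_p (p n) u (matvec (p n) (R n) (X n i \<omega>))) \<le> Cg"
    "\<forall>n l l'. l < K \<and> l' < K \<longrightarrow> norm2_p (p n) (\<lambda>j. beta n l j - beta n l' j) \<le> Cb"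
    by blast
  then show ?thesis using X Y model k sig R S op
    by (intro that[of "sqrt (max C 1) * max Cb 1 * (\<bar>Cg\<bar> + 1)" "max Cb 1"] moe_observationI[OF M]) auto
qed

theorem proposition4:
  fixes M :: "'a measure" and K :: nat and p :: "nat \<Rightarrow> nat"
    and X :: "nat \<Rightarrow> nat \<Rightarrow> 'a \<Rightarrow> nat \<Rightarrow> real" and Y :: "nat \<Rightarrow> nat \<Rightarrow> 'a \<Rightarrow> real"
    and beta alpha :: "nat \<Rightarrow> nat \<Rightarrow> nat \<Rightarrow> real" and sig :: "nat \<Rightarrow> real"
    and beta_hat alpha_hat :: "nat \<Rightarrow> nat \<Rightarrow> 'a \<Rightarrow> nat \<Rightarrow> real"
    and sig_hat :: "nat \<Rightarrow> nat \<Rightarrow> 'a \<Rightarrow> real"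
    and eta :: "nat \<Rightarrow> real"
    and Sig R :: "nat \<Rightarrow> nat \<Rightarrow> nat \<Rightarrow> real" and C_Sig :: real and k :: nat
  assumes M: "prob_space M"
    and k: "k < K"
    and p_lim: "filterlim p at_top sequentially"
    and logp: "(\<lambda>n. ln (real (p n))) \<in> o(\<lambda>n. real n powr (1/4) / sqrt (ln (real n)))"
    \<comment> \<open>data: for each n, (x_i, y_i), i < n, are i.i.d. draws from the MoE model\<close>
    and X_rv: "\<forall>n i. i < n \<longrightarrow> X n i \<in> measurable M (PiM {..<p n} (\<lambda>_. borel))"
    and Y_rv: "\<forall>n i. i < n \<longrightarrow> Y n i \<in> borel_measurable M"
    and indep: "\<forall>n. prob_space.indep_vars M (\<lambda>_. PiM {..<p n} (\<lambda>_. borel) \<Otimes>\<^sub>M borel)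
                      (\<lambda>i \<omega>. (X n i \<omega>, Y n i \<omega>)) {..<n}"
    and ident: "\<forall>n i. i < n \<longrightarrow>
                  distr M (PiM {..<p n} (\<lambda>_. borel)) (X n i) = distr M (PiM {..<p n} (\<lambda>_. borel)) (X n 0)"
    and model: "\<forall>n i. i < n \<longrightarrow>
                  distr M (PiM {..<p n} (\<lambda>_. borel) \<Otimes>\<^sub>M borel) (\<lambda>\<omega>. (X n i \<omega>, Y n i \<omega>)) =
                  bind (distr M (PiM {..<p n} (\<lambda>_. borel)) (X n i))
                    (\<lambda>x. distr (density lborel (\<lambda>y. ennreal (moe_density K (p n) (alpha n) (beta n) sig x y)))
                               (PiM {..<p n} (\<lambda>_. borel) \<Otimes>\<^sub>M borel) (\<lambda>y. (x, y)))"
    \<comment> \<open>estimators are random variables\<close>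
    and beta_hat_rv: "\<forall>n l j. (\<lambda>\<omega>. beta_hat n l \<omega> j) \<in> borel_measurable M"
    and alpha_hat_rv: "\<forall>n l j. (\<lambda>\<omega>. alpha_hat n l \<omega> j) \<in> borel_measurable M"
    and sig_hat_rv: "\<forall>n l. sig_hat n l \<in> borel_measurable M"
    \<comment> \<open>(A1)\<close>
    and A1: "O_p M (\<lambda>n \<omega>. Max ((\<lambda>l. norm1_p (p n) (\<lambda>j. beta_hat n l \<omega> j - beta n l j)
                                    + norm1_p (p n) (\<lambda>j. alpha_hat n l \<omega> j - alpha n l j)
                                    + \<bar>sig_hat n l \<omega> - sig l\<bar>) ` {..<K})) eta"
    and eta_rate: "(\<lambda>n. sqrt (real n) * ln (real n * real (p n)) * (eta n)\<^sup>2) \<longlonglongrightarrow> 0"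
    \<comment> \<open>(A2)\<close>
    and Sig_sym: "\<forall>n. \<forall>i<p n. \<forall>j<p n. Sig n i j = Sig n j i"
    and Sig_psd: "\<forall>n u. inner_p (p n) u (matvec (p n) (Sig n) u) \<ge> 0"
    and Sig_op: "\<forall>n u. norm2_p (p n) (matvec (p n) (Sig n) u) \<le> C_Sig * norm2_p (p n) u"
    and R_inv_sqrt: "\<forall>n. is_inv_sqrt (p n) (R n) (Sig n)"
    and mean_zero: "\<forall>n i j. i < n \<and> j < p n \<longrightarrow>
                      integrable M (\<lambda>\<omega>. matvec (p n) (R n) (X n i \<omega>) j) \<and>
                      (\<integral>\<omega>. matvec (p n) (R n) (X n i \<omega>) j \<partial>M) = 0"
    and subg: "\<exists>C. \<forall>n i u. i < n \<and> norm2_p (p n) u = 1 \<longrightarrow>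
                 subgaussian M (\<lambda>\<omega>. inner_p (p n) u (matvec (p n) (R n) (X n i \<omega>))) \<and>
                 psi2_norm M (\<lambda>\<omega>. inner_p (p n) u (matvec (p n) (R n) (X n i \<omega>))) \<le> C"
    \<comment> \<open>(A3)\<close>
    and sig_pos: "\<forall>l<K. sig l > 0"
    and beta_sep: "\<exists>C. \<forall>n l l'. l < K \<and> l' < K \<longrightarrow> norm2_p (p n) (\<lambda>j. beta n l j - beta n l' j) \<le> C"
  shows "o_p1 M (\<lambda>n \<omega>. Max (insert 0 ((\<lambda>j. \<bar>(1 / real n) * (\<Sum>i<n.
            (resp K (p n) (\<lambda>l. alpha_hat n l \<omega>) (\<lambda>l. beta_hat n l \<omega>) (\<lambda>l. sig_hat n l \<omega>)
                   (X n i \<omega>) (Y n i \<omega>) k / (sig_hat n k \<omega>)\<^sup>2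
             - resp K (p n) (alpha n) (beta n) sig (X n i \<omega>) (Y n i \<omega>) k / (sig k)\<^sup>2)
            * (Y n i \<omega> - inner_p (p n) (X n i \<omega>) (beta n k)) * X n i \<omega> j)\<bar>) ` {..<p n})))"
proof -
  interpret prob_space M by (rule M)
  obtain T B where obs: "\<And>n i. i < n \<Longrightarrow> moe_observation M K (p n) k (alpha n) (beta n) sig (X n i) (Y n i) T B"
    using moe_observation_samples[OF M X_rv Y_rv model k sig_pos R_inv_sqrt Sig_sym Sig_op subg beta_sep] by blast
  obtain s where s: "s > 0" "\<forall>l<K. s \<le> sig l"
  proof (rule that[of "Min (sig ` {..<K})"])
    show "0 < Min (sig ` {..<K})" using sig_pos k by (subst Min_gr_iff) auto
  qed auto
  define D where "D n \<omega> = moe_param_dist K (p n) (alpha n) (beta n) sig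
      (\<lambda>l. alpha_hat n l \<omega>) (\<lambda>l. beta_hat n l \<omega>) (\<lambda>l. sig_hat n l \<omega>)" for n \<omega>
  define A where "A q n = (\<lambda>\<omega>. (1 / real n) * (\<Sum>i<n. moe_envelope K (p n) (beta n) q (X n i \<omega>) (Y n i \<omega>)))"
    for q n
  have mom: "(\<integral>\<^sup>+\<omega>. ennreal (A q n \<omega>) \<partial>M)
      \<le> ennreal (envelope_moment_const K sig T q * (ln (2 * (real (p n) + 1)) + 1)^(q - 1))" if "q \<ge> 2" for q n
    unfolding A_def using obs that by (intro envelope_average_moment_le) auto
  have A_measurable: "A q n \<in> borel_measurable M" for q n
    unfolding A_def by (rule borel_measurable_envelope_average[OF obs])
  show ?thesis unfolding sup_norm_p_def[symmetric]
  proof (rule o_p1_of_quadratic_bound[where D = D and U = "A 2" and V = "A 3" and s = "s/2" and eta = eta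
        and C = "400 * (1 + 1/s)^5" and CU = "envelope_moment_const K sig T 2"
        and CV = "envelope_moment_const K sig T 3" and L = "\<lambda>n. ln (2 * (real (p n) + 1)) + 1"], goal_cases)
    case (2 n \<omega>) then show ?case
      using score_diff_sup_norm_le[OF k s] unfolding D_def A_def by (simp add: sup_norm_p_nonneg)
  next
    show "O_p M D eta" using A1 unfolding D_def moe_param_dist_def by simp
    show "D n \<in> borel_measurable M" for n
      unfolding D_def using beta_hat_rv alpha_hat_rv sig_hat_rv by (intro borel_measurable_moe_param_dist) auto
    show "(\<integral>\<^sup>+\<omega>. ennreal (A 2 n \<omega>) \<partial>M) \<le> ennreal (envelope_moment_const K sig T 2 * (ln (2 * (real (p n) + 1)) + 1))"
      "(\<integral>\<^sup>+\<omega>. ennreal (A 3 n \<omega>) \<partial>M) \<le> ennreal (envelope_moment_const K sig T 3 * (ln (2 * (real (p n) + 1)) + 1)\<^sup>2)"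
      for n using mom[of 2 n] mom[of 3 n] by (simp_all add: numeral_eq_Suc)
    show "(\<lambda>n. eta n * (ln (2 * (real (p n) + 1)) + 1)) \<longlonglongrightarrow> 0"
      by (rule eta_log_dim_tendsto_zero[OF p_lim logp eta_rate])
  qed (use s k A_measurable in \<open>auto simp: D_def A_def envelope_moment_const_def moe_param_dist_nonneg
      moe_envelope_nonneg sum_nonneg moe_envelope_const_nonneg\<close>)
qed

end
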